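(* Let $n\ge1$, $\nu\ge1$ be integers and $\delta\in\{0,1,2\}$, and suppose it is not the case that $\delta=0$ and $\nu$ is odd. Then the chromatic number of $\mathcal{O}^{(2\nu+\delta)}_{2^n}$ is $2^{\nu+\delta-1}+1$.
   Context: Let $V^{2\nu+\delta}$ be the set of tuples $\vec a=(a_1,\ldots,a_{2\nu+\delta})\in(\mathbb{Z}_{2^n})^{2\nu+\delta}$ such that some $a_i$ is a unit of $\mathbb{Z}_{2^n}$. Write $\vec a\sim\vec b$ if $\vec a=\lambda\vec b$ for some $\lambda\in\mathbb{Z}_{2^n}^\times$, let $[\vec a]$ denote the equivalence class and $V^{2\nu+\delta}_\sim$ the set of classes. Let $G_{2\nu+\delta,\Delta}=\begin{pmatrix}0&I_\nu&\\ &0&\\ &&\Delta\end{pmatrix}$ over $\mathbb{Z}_{2^n}$ (first two block sizes $\nu$, unspecified blocks zero), where $\Delta$ is empty if $\delta=0$, $\Delta=(1)$ if $\delta=1$, and $\Delta=\begin{pmatrix}z&1\\0&z\end{pmatrix}$ if $\delta=2$, with $z$ a fixed unit of $\mathbb{Z}_{2^n}$. The orthogonal graph $\mathcal{O}^{(2\nu+\delta)}_{2^n}$ has vertex set $\{[\vec a]\in V^{2\nu+\delta}_\sim:\vec a\,G_{2\nu+\delta,\Delta}\,\vec a^t=0\}$, with $[\vec a]$ adjacent to $[\vec b]$ iff $\vec a(G_{2\nu+\delta,\Delta}+G_{2\nu+\delta,\Delta}^t)\vec b^t\in\mathbb{Z}_{2^n}^\times$. *)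

theory Defs
  imports Main
begin

text \<open>Elements of Z_{2^n} are represented by integers in {0..<2^n}; tuples of length
m = 2 nu + delta by functions nat => int, indices 0..m-1, zero outside.\<close>

definition unit_mod :: "nat \<Rightarrow> int \<Rightarrow> bool" where
  "unit_mod n x \<longleftrightarrow> coprime x (2 ^ n)"

definition Gmat :: "nat \<Rightarrow> nat \<Rightarrow> int \<Rightarrow> nat \<Rightarrow> nat \<Rightarrow> int" where
  "Gmat \<nu> \<delta> z i j =
     (if i < \<nu> \<and> j = \<nu> + i then 1
      else if \<delta> = 1 \<and> i = 2*\<nu> \<and> j = 2*\<nu> then 1
      else if \<delta> = 2 \<and> i = 2*\<nu> \<and> j = 2*\<nu> then z
      else if \<delta> = 2 \<and> i = 2*\<nu> \<and> j = 2*\<nu>+1 then 1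
      else if \<delta> = 2 \<and> i = 2*\<nu>+1 \<and> j = 2*\<nu>+1 then z
      else 0)"

definition Vset :: "nat \<Rightarrow> nat \<Rightarrow> (nat \<Rightarrow> int) set" where
  "Vset n m = {a. (\<forall>i<m. 0 \<le> a i \<and> a i < 2 ^ n) \<and> (\<forall>i\<ge>m. a i = 0)
                  \<and> (\<exists>i<m. unit_mod n (a i))}"

definition vsim :: "nat \<Rightarrow> nat \<Rightarrow> (nat \<Rightarrow> int) \<Rightarrow> (nat \<Rightarrow> int) \<Rightarrow> bool" where
  "vsim n m a b \<longleftrightarrow> (\<exists>c. unit_mod n c \<and> (\<forall>i<m. a i mod 2 ^ n = (c * b i) mod 2 ^ n))"

definition vclass :: "nat \<Rightarrow> nat \<Rightarrow> (nat \<Rightarrow> int) \<Rightarrow> (nat \<Rightarrow> int) set" where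
  "vclass n m a = {b \<in> Vset n m. vsim n m b a}"

definition bform :: "nat \<Rightarrow> (nat \<Rightarrow> nat \<Rightarrow> int) \<Rightarrow> (nat \<Rightarrow> int) \<Rightarrow> (nat \<Rightarrow> int) \<Rightarrow> int" where
  "bform m M a b = (\<Sum>i<m. \<Sum>j<m. a i * M i j * b j)"

definition orth_vertices :: "nat \<Rightarrow> nat \<Rightarrow> nat \<Rightarrow> int \<Rightarrow> (nat \<Rightarrow> int) set set" where
  "orth_vertices n \<nu> \<delta> z =
     {vclass n (2*\<nu>+\<delta>) a | a. a \<in> Vset n (2*\<nu>+\<delta>)
        \<and> bform (2*\<nu>+\<delta>) (Gmat \<nu> \<delta> z) a a mod 2 ^ n = 0}"

text \<open>Adjacency: a (G + G^t) b^t is a unit (independent of representatives).\<close>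
definition orth_adj :: "nat \<Rightarrow> nat \<Rightarrow> nat \<Rightarrow> int \<Rightarrow> (nat \<Rightarrow> int) set \<Rightarrow> (nat \<Rightarrow> int) set \<Rightarrow> bool" where
  "orth_adj n \<nu> \<delta> z X Y \<longleftrightarrow>
     (\<exists>a\<in>X. \<exists>b\<in>Y. unit_mod n
        (bform (2*\<nu>+\<delta>) (\<lambda>i j. Gmat \<nu> \<delta> z i j + Gmat \<nu> \<delta> z j i) a b))"

definition proper_colouring :: "'v set \<Rightarrow> ('v \<Rightarrow> 'v \<Rightarrow> bool) \<Rightarrow> nat \<Rightarrow> ('v \<Rightarrow> nat) \<Rightarrow> bool" where
  "proper_colouring V E k f \<longleftrightarrow>
     (\<forall>x\<in>V. f x < k) \<and> (\<forall>x\<in>V. \<forall>y\<in>V. x \<noteq> y \<and> E x y \<longrightarrow> f x \<noteq> f y)"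

definition chromatic_number :: "'v set \<Rightarrow> ('v \<Rightarrow> 'v \<Rightarrow> bool) \<Rightarrow> nat" where
  "chromatic_number V E = (LEAST k. \<exists>f. proper_colouring V E k f)"

end

(*
  Reduction mod 2 identifies the orthogonal graph with the graph on the nonzero singular vectors
  of the quadratic form Q = x.y + A(z) over GF(2), where A is 0, z^2 or z^2 + z w + w^2,
  two vectors being adjacent when their polar form is 1: adjacency only depends on the
  reductions, and every singular vector lifts to an isotropic vector over Z/2^n.

  Lower bound: a colour class consists of pairwise orthogonal singular vectors, so it spans a
  totally singular subspace, which has at most 2^nu elements. Hence a class has at most
  2^nu - 1 elements, while there are at least (2^(nu+delta-1) + 1)(2^nu - 1) singular vectors.

  Upper bound: identify GF(2)^k with the field GF(2^k) = GF(2)[x]/(f). A singular vector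
  (x, y, ...) with x <> 0 gets the colour a such that y = M_a x, for a family of 2^k self-adjoint
  maps M_a built from multiplication by a; vectors with x = 0 share one extra colour. This needs
  nu = k in the parabolic case and nu = k + 1 with k odd in the hyperbolic case, where M_a must
  moreover be alternating; the elliptic form embeds into the parabolic form of rank nu + 1.
*)

theory Submission
  imports Defs "Berlekamp_Zassenhaus.Distinct_Degree_Factorization"
begin

section \<open>Irreducible polynomials over prime fields\<close>

lemma power_card_degree_mod:
  fixes g p :: "'a::prime_card mod_ring poly"
  assumes irr: "irreducible g"
  shows "p ^ (CARD('a) ^ degree g) mod g = p mod g"
proof -
  interpret poly_mod_type_irr "CARD('a)" g by (unfold_locales, auto simp: irr)
  show ?thesis
  proof (cases "p mod g = 0")
    case True
    then have "g dvd p" by (simp add: mod_eq_0_iff_dvd)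
    then have "g dvd p ^ (CARD('a) ^ degree g)" by (intro dvd_trans[OF _ dvd_power]) simp_all
    then show ?thesis using True by (simp add: mod_eq_0_iff_dvd)
  next
    case False
    then have "p mod g \<in> carrier (mult_of R)"
      using mod_in_carrier[of p] by (simp add: carrier_mult_of R_def)
    from element_power_order_eq_1'[OF this]
    have "(p mod g) ^ (CARD('a) ^ degree g) mod g = p mod g" by simp
    then show ?thesis by (simp add: power_mod)
  qed
qed

lemma monic_irreducible_dvd_eq:
  fixes a b :: "'a::field_gcd poly"
  assumes "irreducible a" "irreducible b" "monic a" "monic b" "a dvd b"
  shows "a = b"
proof -
  obtain c where b: "b = a * c" using assms(5) by (elim dvdE)
  have "is_unit c" using irreducibleD[OF assms(2) b] irreducible_not_unit[OF assms(1)] by auto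
  then have "degree c = 0" by (simp add: is_unit_field_poly)
  moreover have "monic c" using assms(3,4) b by (simp add: lead_coeff_mult)
  ultimately have "c = 1" using monic_degree_0 by blast
  then show ?thesis using b by simp
qed

lemma prod_monic_irreducibles_dvd:
  fixes Q :: "'a::field_gcd poly"
  assumes "finite A" "A \<subseteq> {q. irreducible q \<and> monic q}" "\<forall>a\<in>A. a dvd Q"
  shows "\<Prod>A dvd Q"
  using assms
proof (induction A rule: finite_induct)
  case empty
  then show ?case by simp
next
  case (insert a B)
  have irr: "irreducible a" "monic a" using insert.prems by auto
  have "\<not> a dvd \<Prod>B"
  proof
    assume "a dvd \<Prod>B"
    then obtain b where "b \<in> B" "a dvd b" using irreducible_dvd_prod[OF irr(1), of id B] by auto
    then have "a = b" using monic_irreducible_dvd_eq[of a b] irr insert.prems(1) by auto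
    then show False using insert.hyps \<open>b \<in> B\<close> by auto
  qed
  have "prime_elem a" using irr(1) by (simp add: prime_elem_iff_irreducible)
  have "a dvd Q" "\<Prod>B dvd Q" using insert by auto
  from divides_mult[OF this prime_elem_imp_coprime[OF \<open>prime_elem a\<close> \<open>\<not> a dvd \<Prod>B\<close>]]
  show ?case using insert by simp
qed

lemma sum_powers_less:
  assumes "(q::nat) \<ge> 2"
  shows "(\<Sum>k\<in>{1..m}. q ^ k) < q ^ Suc m"
proof (induction m)
  case 0
  then show ?case using assms by simp
next
  case (Suc m)
  have "(\<Sum>k\<in>{1..Suc m}. q ^ k) = (\<Sum>k\<in>{1..m}. q ^ k) + q ^ Suc m"
    by simp
  also have "\<dots> < q ^ Suc m + q ^ Suc m" using Suc by simp
  also have "\<dots> = 2 * q ^ Suc m" by simp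
  also have "\<dots> \<le> q * q ^ Suc m" using assms by (rule mult_le_mono1)
  finally show ?case by simp
qed

lemma irreducible_dvd_X_power_card:
  fixes g :: "'a::prime_card mod_ring poly"
  assumes g: "irreducible g" "g dvd monom 1 1 ^ (CARD('a) ^ d) - monom 1 1"
    and d: "d \<ge> 1" "degree g \<noteq> d"
  shows "2 * degree g \<le> d"
proof -
  define X :: "'a mod_ring poly" where "X = monom 1 1"
  define e where "e = degree g"
  have "\<not> d < e"
    using degree_divisor(2)[OF g(1) e_def[symmetric], of d] d g(2) by auto
  moreover have "\<not> (e < d \<and> d < 2 * e)"
  proof
    assume lt: "e < d \<and> d < 2 * e"
    define y where "y = X ^ (CARD('a) ^ (d - e))"
    have "X ^ (CARD('a) ^ d) = y ^ (CARD('a) ^ e)"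
      using lt unfolding y_def by (simp add: power_mult[symmetric] power_add[symmetric])
    then have "X ^ (CARD('a) ^ d) mod g = y mod g"
      using power_card_degree_mod[OF g(1)] e_def by simp
    moreover have "X ^ (CARD('a) ^ d) mod g = X mod g"
      using g(2) unfolding X_def by (simp add: mod_eq_dvd_iff_poly)
    ultimately have "g dvd X - y" by (simp add: mod_eq_dvd_iff_poly)
    then have "g dvd X ^ (CARD('a) ^ (d - e)) - X" unfolding y_def
      by (metis dvd_minus_iff minus_diff_eq)
    moreover have "1 \<le> d - e" "d - e < e" using lt by auto
    ultimately show False
      using degree_divisor(2)[OF g(1) e_def[symmetric], of "d - e"] unfolding X_def by simp
  qed
  ultimately show ?thesis using d(2) unfolding e_def by linarith
qed

text \<open>If there were no irreducible polynomial of degree d, every irreducible factor of the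
  squarefree polynomial X^(q^d) - X would have degree at most d/2 and hence divide the product of
  the X^(q^k) - X for k \<le> d/2, whose degree is too small.\<close>

lemma irreducible_exists:
  assumes d: "d \<ge> 1"
  shows "\<exists>f::'a::prime_card mod_ring poly. irreducible f \<and> degree f = d"
proof (rule ccontr)
  assume none: "\<not> ?thesis"
  define q where "q = CARD('a)"
  define P :: "nat \<Rightarrow> 'a mod_ring poly" where "P k = monom 1 (q ^ k) - monom 1 1" for k
  have q: "q \<ge> 2" unfolding q_def using prime_card[where 'a='a] prime_ge_2_nat by blast
  have P_alt: "P k = monom 1 1 ^ (q ^ k) - monom 1 1" for k unfolding P_def by (simp add: monom_power)
  have degP: "degree (P k) = q ^ k" if "k \<ge> 1" for k
  proof -
    have "1 < q ^ k" using q that by (intro one_less_power) auto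
    then show ?thesis unfolding P_def by (simp add: degree_monom_eq degree_minus_eq_right)
  qed
  have P0: "P k \<noteq> 0" if "k \<ge> 1" for k
  proof
    assume "P k = 0"
    then have "q ^ k = 0" using degP[OF that] by simp
    then show False using q by simp
  qed
  have "1 < q ^ d" using q d by (intro one_less_power) auto
  then have monicP: "monic (P d)" using degP[OF d] unfolding P_def by (simp add: degree_monom_eq)
  have "of_nat (q ^ d) = (0::'a mod_ring)"
    using d unfolding q_def by (simp add: of_nat_card_eq_0)
  then have "pderiv (P d) = - 1" unfolding P_def by (simp add: pderiv_diff pderiv_monom)
  then have "separable (P d)" unfolding separable_def by simp
  then have "square_free (P d)" by (rule separable_imp_square_free)
  then obtain A where A: "finite A" "P d = \<Prod>A" "A \<subseteq> {q. irreducible q \<and> monic q}"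
    using monic_square_free_irreducible_factorization[OF monicP] by auto
  define Q where "Q = (\<Prod>k\<in>{1..d div 2}. P k)"
  have "\<forall>a\<in>A. a dvd Q"
  proof
    fix a assume a: "a \<in> A"
    then have ai: "irreducible a" using A by auto
    have "a dvd P d" using dvd_prodI[OF A(1) a, of id] A(2) by simp
    then have "2 * degree a \<le> d"
      using irreducible_dvd_X_power_card[OF ai _ d] none ai unfolding P_alt q_def by auto
    moreover have "degree a \<ge> 1" using irreducible_degree_field[OF ai] by simp
    ultimately have mem: "degree a \<in> {1..d div 2}" by auto
    have "a dvd P (degree a)" using degree_divisor(1)[OF ai refl] unfolding P_alt q_def .
    also have "P (degree a) dvd Q" unfolding Q_def using mem by (rule dvd_prodI[rotated]) simp
    finally show "a dvd Q" .
  qed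
  then have "P d dvd Q" using prod_monic_irreducibles_dvd[OF A(1) A(3)] A(2) by simp
  moreover have "Q \<noteq> 0" unfolding Q_def using P0 by auto
  ultimately have "degree (P d) \<le> degree Q" by (simp add: dvd_imp_degree_le)
  moreover have "degree Q = (\<Sum>k\<in>{1..d div 2}. q ^ k)"
    unfolding Q_def using P0 degP by (subst degree_prod_eq_sum_degree) auto
  ultimately have "q ^ d \<le> (\<Sum>k\<in>{1..d div 2}. q ^ k)" using degP[OF d] by simp
  also have "\<dots> < q ^ Suc (d div 2)" by (rule sum_powers_less[OF q])
  finally have "q ^ d < q ^ Suc (d div 2)" .
  moreover have "q ^ Suc (d div 2) \<le> q ^ d" using q d by (intro power_increasing) auto
  ultimately show False by simp
qed

section \<open>Vectors over GF(2)\<close>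

type_synonym gf2 = "bool mod_ring"

lemma gf2_two: "(2::gf2) = 0"
  using of_nat_card_eq_0[where 'a=bool] by simp

lemma gf2_cases: "(x::gf2) = 0 \<or> x = 1"
proof -
  obtain i where "i < 2" "x = of_nat i" using surj_of_nat_mod_ring[of x] by auto
  then show ?thesis by (cases i) auto
qed

lemma gf2_neq_0_iff: "(x::gf2) \<noteq> 0 \<longleftrightarrow> x = 1"
  using gf2_cases[of x] by auto

lemma gf2_add_self[simp]: "(x::gf2) + x = 0"
  using gf2_cases[of x] gf2_two by auto

lemma gf2_mult_self[simp]: "(x::gf2) * x = x"
  using gf2_cases[of x] by auto

lemma of_int_gf2_eq_0_iff: "(of_int x :: gf2) = 0 \<longleftrightarrow> even x"
  unfolding of_int_of_int_mod_ring by transfer auto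

lemma of_int_gf2_eq_1_iff: "(of_int x :: gf2) = 1 \<longleftrightarrow> odd x"
  using gf2_cases[of "of_int x"] of_int_gf2_eq_0_iff[of x] by auto

lemma gf2_poly_add_self[simp]: "(p::gf2 poly) + p = 0"
proof -
  have "p + p = smult (1 + 1) p" by (simp only: smult_add_left smult_1_left)
  then show ?thesis by (simp add: gf2_two)
qed

lemma gf2_poly_uminus[simp]: "- (p::gf2 poly) = p"
  by (metis add_eq_0_iff2 gf2_poly_add_self)

lemma gf2_poly_minus: "(p::gf2 poly) - q = p + q"
  by (metis diff_conv_add_uminus gf2_poly_uminus)

lemma gf2_poly_add_power_two: "((p::gf2 poly) + q) ^ (2^j) = p ^ (2^j) + q ^ (2^j)"
  using add_power_prime_poly_mod_ring[of p q j] by simp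

definition vecs :: "nat \<Rightarrow> (nat \<Rightarrow> gf2) set" where
  "vecs m = {u. \<forall>i\<ge>m. u i = 0}"

definition vadd :: "(nat \<Rightarrow> gf2) \<Rightarrow> (nat \<Rightarrow> gf2) \<Rightarrow> nat \<Rightarrow> gf2" where
  "vadd u v = (\<lambda>i. u i + v i)"

definition dotp :: "nat \<Rightarrow> (nat \<Rightarrow> gf2) \<Rightarrow> (nat \<Rightarrow> gf2) \<Rightarrow> gf2" where
  "dotp k x y = (\<Sum>i<k. x i * y i)"

lemma finite_vecs: "finite (vecs m)"
proof -
  have "vecs m = {f. \<forall>x. (x \<in> {..<m} \<longrightarrow> f x \<in> UNIV) \<and> (x \<notin> {..<m} \<longrightarrow> f x = 0)}"
    unfolding vecs_def by auto
  then show ?thesis using finite_set_of_finite_funs[of "{..<m}" "UNIV::gf2 set" 0] by simp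
qed

lemma card_vecs: "card (vecs m) = 2 ^ m"
proof (induction m)
  case 0
  have "vecs 0 = {\<lambda>i. 0}" unfolding vecs_def by auto
  then show ?case by simp
next
  case (Suc m)
  define h where "h = (\<lambda>(u::nat\<Rightarrow>gf2, c::gf2). u(m := c))"
  have inj: "inj_on h (vecs m \<times> UNIV)"
  proof (rule inj_onI)
    fix p q assume p: "p \<in> vecs m \<times> UNIV" and q: "q \<in> vecs m \<times> UNIV" and e: "h p = h q"
    obtain u c where pu: "p = (u, c)" by (cases p)
    obtain v d where qv: "q = (v, d)" by (cases q)
    have um: "u m = 0" "v m = 0" using p q pu qv unfolding vecs_def by auto
    have eq: "u(m:=c) = v(m:=d)" using e pu qv unfolding h_def by simp
    have cd: "c = d" using fun_cong[OF eq, of m] by simp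
    have "u i = v i" for i
    proof (cases "i = m")
      case True then show ?thesis using um by simp
    next
      case False then show ?thesis using fun_cong[OF eq, of i] by simp
    qed
    then have "u = v" by (rule ext)
    then show "p = q" using pu qv cd by simp
  qed
  have img: "h ` (vecs m \<times> UNIV) = vecs (Suc m)"
  proof
    show "h ` (vecs m \<times> UNIV) \<subseteq> vecs (Suc m)" unfolding h_def vecs_def by auto
  next
    show "vecs (Suc m) \<subseteq> h ` (vecs m \<times> UNIV)"
    proof
      fix w assume w: "w \<in> vecs (Suc m)"
      have "w = h (w(m := 0), w m)" unfolding h_def by simp
      moreover have "w(m := 0) \<in> vecs m" using w unfolding vecs_def by auto
      ultimately show "w \<in> h ` (vecs m \<times> UNIV)" by blast
    qed
  qed
  have "card (vecs (Suc m)) = card (vecs m \<times> (UNIV::gf2 set))"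
    using card_image[OF inj] img by simp
  also have "\<dots> = 2^m * 2" using Suc by (simp add: card_cartesian_product)
  finally show ?case by simp
qed

lemma zero_in_vecs: "(\<lambda>i. 0) \<in> vecs m"
  unfolding vecs_def by simp

lemma vecs_index_less: "u \<in> vecs m \<Longrightarrow> u i \<noteq> 0 \<Longrightarrow> i < m"
  unfolding vecs_def by (rule ccontr) auto

lemma vadd_in_vecs: "u \<in> vecs m \<Longrightarrow> v \<in> vecs m \<Longrightarrow> vadd u v \<in> vecs m"
  unfolding vecs_def vadd_def by auto

lemma vadd_cancel: "vadd (vadd u v) v = u"
  unfolding vadd_def by (simp add: add.assoc)

lemma dotp_Suc: "dotp (Suc k) x y = dotp k x y + x k * y k"
  unfolding dotp_def by simp

lemma dotp_comm: "dotp k x y = dotp k y x"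
  unfolding dotp_def by (simp add: mult.commute)

lemma dotp_vadd_right: "dotp k x (vadd y z) = dotp k x y + dotp k x z"
  unfolding dotp_def vadd_def by (simp add: distrib_left sum.distrib)

lemma card_level_half:
  fixes l :: "(nat \<Rightarrow> gf2) \<Rightarrow> gf2"
  assumes add: "\<And>x y. x \<in> vecs m \<Longrightarrow> y \<in> vecs m \<Longrightarrow> l (vadd x y) = l x + l y"
    and x0: "x0 \<in> vecs m" "l x0 \<noteq> 0"
  shows "card {x\<in>vecs m. l x = c} = 2^m div 2"
proof -
  define Z where "Z = {x\<in>vecs m. l x = 0}"
  define Ones where "Ones = {x\<in>vecs m. l x = 1}"
  have lx0: "l x0 = 1" using x0 gf2_neq_0_iff by auto
  define t where "t = (\<lambda>x. vadd x x0)"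
  have "inj_on t Z" unfolding t_def by (rule inj_onI) (metis vadd_cancel)
  moreover have "t ` Z = Ones"
  proof
    show "t ` Z \<subseteq> Ones" unfolding t_def Z_def Ones_def using add x0 lx0 vadd_in_vecs by auto
  next
    show "Ones \<subseteq> t ` Z"
    proof
      fix y assume y: "y \<in> Ones"
      have "y = t (t y)" unfolding t_def by (simp add: vadd_cancel)
      moreover have "t y \<in> Z" using y unfolding t_def Z_def Ones_def using add x0 lx0 vadd_in_vecs by auto
      ultimately show "y \<in> t ` Z" by blast
    qed
  qed
  ultimately have cZO: "card Z = card Ones" by (metis card_image)
  have "Z \<union> Ones = vecs m" unfolding Z_def Ones_def using gf2_cases by auto
  moreover have "Z \<inter> Ones = {}" unfolding Z_def Ones_def by auto
  moreover have "finite Z" "finite Ones" unfolding Z_def Ones_def using finite_vecs by auto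
  ultimately have "card Z + card Ones = 2^m" using card_vecs card_Un_disjoint by metis
  then have "2 * card Z = 2^m" "2 * card Ones = 2^m" using cZO by simp_all
  then have "card Z = 2^m div 2" "card Ones = 2^m div 2"
    by (metis nonzero_mult_div_cancel_left zero_neq_numeral)+
  then show ?thesis using gf2_cases[of c] unfolding Z_def Ones_def by auto
qed

lemma dotp_nonzero:
  assumes X: "X \<in> vecs m" "X \<noteq> (\<lambda>i. 0)"
  obtains e where "e \<in> vecs m" "dotp m X e \<noteq> 0"
proof -
  obtain j where j: "X j \<noteq> 0" using X(2) by auto
  then have jm: "j < m" using X(1) unfolding vecs_def by (auto simp: not_le[symmetric])
  define e where "e = (\<lambda>i. if i = j then (1::gf2) else 0)"
  have "e \<in> vecs m" unfolding e_def vecs_def using jm by auto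
  moreover have "dotp m X e = (\<Sum>i<m. if i = j then X j else 0)"
    unfolding dotp_def by (rule sum.cong) (auto simp: e_def)
  then have "dotp m X e = X j" using jm by (simp add: sum.delta)
  ultimately show ?thesis using that j by simp
qed

lemma card_dotp_level:
  assumes "X \<in> vecs m" "X \<noteq> (\<lambda>i. 0)"
  shows "card {Y\<in>vecs m. dotp m X Y = c} = 2^m div 2"
proof -
  obtain e where "e \<in> vecs m" "dotp m X e \<noteq> 0" by (rule dotp_nonzero[OF assms])
  then show ?thesis by (intro card_level_half[of m "dotp m X" e]) (simp_all add: dotp_vadd_right)
qed

definition poly_of_vec :: "nat \<Rightarrow> (nat \<Rightarrow> gf2) \<Rightarrow> gf2 poly" where
  "poly_of_vec k x = (\<Sum>i<k. monom (x i) i)"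

lemma coeff_poly_of_vec: "coeff (poly_of_vec k x) i = (if i < k then x i else 0)"
  unfolding poly_of_vec_def by (simp add: coeff_sum coeff_monom)

lemma degree_poly_of_vec_less: "k \<ge> 1 \<Longrightarrow> degree (poly_of_vec k x) < k"
proof -
  assume k: "k \<ge> 1"
  have "degree (poly_of_vec k x) \<le> k - 1"
    by (rule degree_le) (auto simp: coeff_poly_of_vec)
  then show ?thesis using k by simp
qed

lemma poly_of_vec_inj: "x \<in> vecs k \<Longrightarrow> y \<in> vecs k \<Longrightarrow> poly_of_vec k x = poly_of_vec k y \<Longrightarrow> x = y"
proof (rule ext)
  fix i assume x: "x \<in> vecs k" and y: "y \<in> vecs k" and e: "poly_of_vec k x = poly_of_vec k y"
  show "x i = y i"
  proof (cases "i < k")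
    case True
    then show ?thesis using arg_cong[OF e, of "\<lambda>p. coeff p i"] by (simp add: coeff_poly_of_vec)
  next
    case False
    then show ?thesis using x y unfolding vecs_def by auto
  qed
qed

lemma poly_of_vec_zero: "poly_of_vec k (\<lambda>i. 0) = 0"
  unfolding poly_of_vec_def by simp

lemma poly_of_vec_eq_0: "x \<in> vecs k \<Longrightarrow> poly_of_vec k x = 0 \<Longrightarrow> x = (\<lambda>i. 0)"
  using poly_of_vec_inj[of x k "\<lambda>i. 0"] zero_in_vecs poly_of_vec_zero by simp

lemma poly_of_vec_coeff: "degree p < k \<Longrightarrow> poly_of_vec k (\<lambda>i. coeff p i) = p"
  by (rule poly_eqI) (auto simp: coeff_poly_of_vec intro: coeff_eq_0)

lemma monom_eq_smult: "monom (c::gf2) i = smult c (monom 1 i)"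
  by (metis mult.right_neutral smult_monom)

lemma poly_of_vec_mult: "poly_of_vec k x * w = (\<Sum>i<k. smult (x i) (monom 1 i * w))"
  unfolding poly_of_vec_def sum_distrib_right
  by (intro sum.cong refl) (subst monom_eq_smult, simp only: mult_smult_left)

section \<open>The field GF(2^k) as GF(2)[x]/(f)\<close>

locale gf2_ext =
  fixes f :: "gf2 poly" and k :: nat
  assumes irr: "irreducible f" and degf: "degree f = k"
begin

lemma degree_pos: "k \<ge> 1"
  using irreducible_degree_field[OF irr] degf by simp

lemma f_nonzero: "f \<noteq> 0"
  using irr by auto

lemma dvd_degree_less: "degree p < k \<Longrightarrow> f dvd p \<Longrightarrow> p = 0"
proof (rule ccontr)
  assume "degree p < k" "f dvd p" "p \<noteq> 0"
  then have "degree f \<le> degree p" by (simp add: dvd_imp_degree_le)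
  then show False using \<open>degree p < k\<close> degf by simp
qed

lemma f_dvd_mult: "f dvd p * q \<Longrightarrow> f dvd p \<or> f dvd q"
proof -
  have "prime_elem f" using irr by (simp add: prime_elem_iff_irreducible)
  then show "f dvd p * q \<Longrightarrow> f dvd p \<or> f dvd q" by (simp add: prime_elem_dvd_mult_iff)
qed

lemma f_dvd_power_two_degree_minus: "f dvd p ^ (2^k) - p"
  using power_card_degree_mod[OF irr, of p] degf by (simp add: mod_eq_dvd_iff_poly)

definition nondegenerate_functional :: "(gf2 poly \<Rightarrow> gf2) \<Rightarrow> bool" where
  "nondegenerate_functional \<phi> \<longleftrightarrow> (\<forall>p q. \<phi> (p + q) = \<phi> p + \<phi> q) \<and> (\<forall>c p. \<phi> (smult c p) = c * \<phi> p)
     \<and> (\<forall>p. \<phi> p = \<phi> (p mod f)) \<and> (\<forall>w. \<not> f dvd w \<longrightarrow> (\<exists>i<k. \<phi> (monom 1 i * w) \<noteq> 0))"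

definition coord_vec :: "(gf2 poly \<Rightarrow> gf2) \<Rightarrow> gf2 poly \<Rightarrow> nat \<Rightarrow> gf2" where
  "coord_vec \<phi> w = (\<lambda>i. if i < k then \<phi> (monom 1 i * w) else 0)"

lemma coord_vec_in_vecs: "coord_vec \<phi> w \<in> vecs k"
  unfolding coord_vec_def vecs_def by auto

context
  fixes \<phi> assumes \<phi>: "nondegenerate_functional \<phi>"
begin

lemma phi_add: "\<phi> (p + q) = \<phi> p + \<phi> q"
  using \<phi> unfolding nondegenerate_functional_def by blast
lemma phi_smult: "\<phi> (smult c p) = c * \<phi> p"
  using \<phi> unfolding nondegenerate_functional_def by blast
lemma phi_nondeg: "\<not> f dvd w \<Longrightarrow> \<exists>i<k. \<phi> (monom 1 i * w) \<noteq> 0"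
  using \<phi> unfolding nondegenerate_functional_def by blast
lemma phi_zero: "\<phi> 0 = 0"
  using phi_add[of 0 0] by simp
lemma phi_sum: "\<phi> (\<Sum>i\<in>A. h i) = (\<Sum>i\<in>A. \<phi> (h i))"
  by (induction A rule: infinite_finite_induct) (auto simp: phi_zero phi_add)
lemma dotp_coord_vec: "dotp k x (coord_vec \<phi> w) = \<phi> (poly_of_vec k x * w)"
  unfolding poly_of_vec_mult phi_sum dotp_def coord_vec_def by (simp add: phi_smult)

lemma coord_vec_eq_imp_dvd: "coord_vec \<phi> w = coord_vec \<phi> w' \<Longrightarrow> f dvd w - w'"
proof (rule ccontr)
  assume e: "coord_vec \<phi> w = coord_vec \<phi> w'" and nd: "\<not> f dvd w - w'"
  obtain i where i: "i < k" "\<phi> (monom 1 i * (w - w')) \<noteq> 0" using phi_nondeg[OF nd] by auto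
  have "\<phi> (monom 1 i * w) = \<phi> (monom 1 i * w')" using fun_cong[OF e, of i] i(1) unfolding coord_vec_def by simp
  moreover have "monom 1 i * (w - w') = monom 1 i * w + monom 1 i * w'"
    by (simp add: gf2_poly_minus distrib_left)
  ultimately show False using i(2) phi_add by simp
qed

end

definition top_coeff :: "gf2 poly \<Rightarrow> gf2" where
  "top_coeff p = coeff (p mod f) (k - 1)"

lemma nondegenerate_top_coeff: "nondegenerate_functional top_coeff"
  unfolding nondegenerate_functional_def
proof (intro conjI allI impI)
  fix p q show "top_coeff (p + q) = top_coeff p + top_coeff q" unfolding top_coeff_def by (simp add: poly_mod_add_left)
next
  fix c p show "top_coeff (smult c p) = c * top_coeff p" unfolding top_coeff_def by (simp add: mod_smult_left)
next
  fix p show "top_coeff p = top_coeff (p mod f)" unfolding top_coeff_def by simp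
next
  fix w assume nd: "\<not> f dvd w"
  define g where "g = w mod f"
  have g0: "g \<noteq> 0" using nd unfolding g_def by (simp add: mod_eq_0_iff_dvd)
  have dg: "degree g < k" unfolding g_def using degf f_nonzero degree_pos
    by (metis degree_mod_less' g0 g_def)
  define i where "i = k - 1 - degree g"
  have ik: "i < k" unfolding i_def using degree_pos by simp
  have dm: "degree (monom (1::gf2) i * g) < k"
    using dg g0 degree_pos unfolding i_def by (simp add: degree_mult_eq degree_monom_eq)
  have "(monom 1 i * w) mod f = (monom 1 i * g) mod f" unfolding g_def by (simp add: mod_mult_right_eq)
  also have "\<dots> = monom 1 i * g" using dm degf by (simp add: mod_poly_less)
  finally have "top_coeff (monom 1 i * w) = coeff (monom 1 i * g) (i + degree g)"
    unfolding top_coeff_def i_def using dg by simp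
  also have "\<dots> = lead_coeff g" by (simp add: coeff_monom_mult)
  finally show "\<exists>i<k. top_coeff (monom 1 i * w) \<noteq> 0" using ik g0 by auto
qed

text \<open>The field trace lies in GF(2), so it may be read off as the constant coefficient.\<close>

definition trace :: "gf2 poly \<Rightarrow> gf2" where
  "trace p = coeff ((\<Sum>i<k. p ^ (2^i)) mod f) 0"

lemma trace_add: "trace (p + q) = trace p + trace q"
  unfolding trace_def gf2_poly_add_power_two by (simp add: sum.distrib poly_mod_add_left)

lemma trace_zero: "trace 0 = 0"
  unfolding trace_def by simp

lemma trace_smult: "trace (smult c p) = c * trace p"
  using gf2_cases[of c] trace_zero by auto

lemma trace_sum: "trace (\<Sum>i\<in>A. h i) = (\<Sum>i\<in>A. trace (h i))"
  by (induction A rule: infinite_finite_induct) (auto simp: trace_zero trace_add)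

lemma trace_cong: "f dvd p - q \<Longrightarrow> trace p = trace q"
proof -
  assume "f dvd p - q"
  then have pq: "p mod f = q mod f" by (simp add: mod_eq_dvd_iff_poly)
  have "(\<Sum>i<k. p ^ (2^i)) mod f = (\<Sum>i<k. p ^ (2^i) mod f) mod f" by (simp add: mod_sum_eq)
  also have "\<dots> = (\<Sum>i<k. q ^ (2^i) mod f) mod f"
  proof (rule arg_cong[where f="\<lambda>x. x mod f"], rule sum.cong[OF refl])
    fix i assume "i \<in> {..<k}"
    have "p ^ (2^i) mod f = (p mod f) ^ (2^i) mod f" by (simp add: power_mod)
    also have "\<dots> = (q mod f) ^ (2^i) mod f" by (simp add: pq)
    also have "\<dots> = q ^ (2^i) mod f" by (simp add: power_mod)
    finally show "p ^ (2^i) mod f = q ^ (2^i) mod f" .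
  qed
  also have "\<dots> = (\<Sum>i<k. q ^ (2^i)) mod f" by (simp add: mod_sum_eq)
  finally show ?thesis unfolding trace_def by simp
qed

lemma trace_mod: "trace p = trace (p mod f)"
  by (rule trace_cong) (simp add: mod_eq_dvd_iff_poly[symmetric])

lemma trace_dvd: "f dvd p \<Longrightarrow> trace p = 0"
  using trace_cong[of p 0] trace_zero by simp

lemma trace_square: "trace (p ^ 2) = trace p"
proof -
  define g where "g i = p ^ (2^i)" for i
  define S1 where "S1 = (\<Sum>i<k. g (Suc i))"
  define S0 where "S0 = (\<Sum>i<k. g i)"
  have A1: "(\<Sum>i<Suc k. g i) = g 0 + S1" unfolding S1_def by (rule sum.lessThan_Suc_shift)
  have A2: "(\<Sum>i<Suc k. g i) = S0 + g k" unfolding S0_def by (rule sum.lessThan_Suc)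
  have "S1 - S0 = g k - g 0" using A1 A2 by (simp add: algebra_simps)
  moreover have "f dvd g k - g 0" unfolding g_def using f_dvd_power_two_degree_minus by simp
  ultimately have "f dvd S1 - S0" by simp
  then have m: "S1 mod f = S0 mod f" by (simp add: mod_eq_dvd_iff_poly)
  have "(\<Sum>i<k. (p^2) ^ (2^i)) = S1" unfolding S1_def
  proof (rule sum.cong[OF refl])
    fix i show "(p^2) ^ (2^i) = g (Suc i)" unfolding g_def by (simp only: power_mult[symmetric] power_Suc)
  qed
  then show ?thesis using m unfolding trace_def S0_def g_def by simp
qed

lemma trace_one: "odd k \<Longrightarrow> trace 1 = 1"
proof -
  assume ok: "odd k"
  have "of_nat k = (1::gf2)"
  proof -
    obtain j where "k = 2 * j + 1" using ok oddE by blast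
    then show ?thesis by (simp add: gf2_two)
  qed
  then have "(\<Sum>i<k. (1::gf2 poly) ^ (2^i)) = 1" by (simp add: of_nat_poly)
  moreover have "(1::gf2 poly) mod f = 1" using degf degree_pos by (simp add: mod_poly_less)
  ultimately show ?thesis unfolding trace_def by simp
qed

lemma trace_nondegenerate:
  assumes ok: "odd k" and nd: "\<not> f dvd w"
  shows "\<exists>i<k. trace (monom 1 i * w) \<noteq> 0"
proof (rule ccontr)
  assume all0: "\<not> ?thesis"
  have pf: "prime_elem f" using irr by (simp add: prime_elem_iff_irreducible)
  have gcd1: "gcd f w = 1"
    using prime_elem_imp_coprime[OF pf nd] by (rule coprime_imp_gcd_eq_1)
  define s where "s = fst (bezout_coefficients f w)"
  define t where "t = snd (bezout_coefficients f w)"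
  have st: "s * f + t * w = 1"
    using bezout_coefficients_fst_snd[of f w] gcd1 unfolding s_def t_def by simp
  define u where "u = t mod f"
  have du: "degree u < k"
  proof (cases "u = 0")
    case True then show ?thesis using degree_pos by simp
  next
    case False then show ?thesis using degree_mod_less'[OF f_nonzero False[unfolded u_def]] degf
      unfolding u_def by simp
  qed
  have "f dvd u * w - 1"
  proof -
    have "u * w - 1 = (u - t) * w - s * f" using st by (simp add: algebra_simps)
    moreover have "f dvd u - t" unfolding u_def by (simp add: mod_eq_dvd_iff_poly[symmetric])
    ultimately show ?thesis by simp
  qed
  then have "trace (u * w) = trace 1" by (rule trace_cong)
  then have "trace (u * w) = 1" using trace_one[OF ok] by simp
  moreover have "trace (u * w) = 0"
  proof -
    have "u * w = poly_of_vec k (\<lambda>i. coeff u i) * w" using poly_of_vec_coeff[OF du] by simp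
    also have "\<dots> = (\<Sum>i<k. smult (coeff u i) (monom 1 i * w))" by (rule poly_of_vec_mult)
    finally have "trace (u * w) = (\<Sum>i<k. coeff u i * trace (monom 1 i * w))"
      by (simp add: trace_sum trace_smult)
    also have "\<dots> = 0" using all0 by simp
    finally show ?thesis .
  qed
  ultimately show False by simp
qed

lemma nondegenerate_trace: "odd k \<Longrightarrow> nondegenerate_functional trace"
  unfolding nondegenerate_functional_def using trace_add trace_smult trace_mod trace_nondegenerate by blast

definition par_map :: "(nat \<Rightarrow> gf2) \<Rightarrow> (nat \<Rightarrow> gf2) \<Rightarrow> nat \<Rightarrow> gf2" where
  "par_map a x = coord_vec top_coeff (poly_of_vec k a * poly_of_vec k x)"

lemma par_map_in_vecs: "par_map a x \<in> vecs k"
  unfolding par_map_def by (rule coord_vec_in_vecs)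

lemma par_map_sym: "dotp k x (par_map a y) = dotp k y (par_map a x)"
  unfolding par_map_def dotp_coord_vec[OF nondegenerate_top_coeff] by (simp add: ac_simps)

lemma par_map_inj:
  assumes a: "a \<in> vecs k" and b: "b \<in> vecs k" and x: "x \<in> vecs k" "x \<noteq> (\<lambda>i. 0)"
    and e: "par_map a x = par_map b x"
  shows "a = b"
proof -
  have "f dvd poly_of_vec k a * poly_of_vec k x - poly_of_vec k b * poly_of_vec k x"
    using coord_vec_eq_imp_dvd[OF nondegenerate_top_coeff] e unfolding par_map_def by blast
  then have "f dvd (poly_of_vec k a - poly_of_vec k b) * poly_of_vec k x" by (simp add: algebra_simps)
  then have "f dvd poly_of_vec k a - poly_of_vec k b \<or> f dvd poly_of_vec k x" by (rule f_dvd_mult)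
  moreover have "\<not> f dvd poly_of_vec k x"
    using dvd_degree_less[OF degree_poly_of_vec_less[OF degree_pos]] poly_of_vec_eq_0[OF x(1)] x(2) by blast
  ultimately have "f dvd poly_of_vec k a - poly_of_vec k b" by simp
  moreover have "degree (poly_of_vec k a - poly_of_vec k b) < k"
    using degree_poly_of_vec_less[OF degree_pos] by (simp add: degree_diff_less)
  ultimately have "poly_of_vec k a - poly_of_vec k b = 0" using dvd_degree_less by blast
  then show ?thesis using poly_of_vec_inj[OF a b] by simp
qed

lemma par_map_surj:
  assumes x: "x \<in> vecs k" "x \<noteq> (\<lambda>i. 0)" and y: "y \<in> vecs k"
  shows "\<exists>a\<in>vecs k. par_map a x = y"
proof -
  have sub: "(\<lambda>a. par_map a x) ` vecs k \<subseteq> vecs k" using par_map_in_vecs by auto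
  have inj: "inj_on (\<lambda>a. par_map a x) (vecs k)"
    by (rule inj_onI) (rule par_map_inj[OF _ _ x], assumption+)
  have "(\<lambda>a. par_map a x) ` vecs k = vecs k" by (rule endo_inj_surj[OF finite_vecs sub inj])
  then have "y \<in> (\<lambda>a. par_map a x) ` vecs k" using y by simp
  then show ?thesis by blast
qed

definition sqrt_mod :: "gf2 poly \<Rightarrow> gf2 poly" where
  "sqrt_mod p = p ^ (2^(k-1))"

lemma sqrt_mod_square: "f dvd (sqrt_mod p)^2 - p"
proof -
  have "(sqrt_mod p)^2 = p ^ (2^k)" unfolding sqrt_mod_def using degree_pos
    by (simp add: power_mult[symmetric] power_Suc[symmetric] mult.commute)
  then show ?thesis using f_dvd_power_two_degree_minus by simp
qed

lemma sqrt_mod_add: "sqrt_mod (p + q) = sqrt_mod p + sqrt_mod q"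
  unfolding sqrt_mod_def by (rule gf2_poly_add_power_two)

text \<open>For odd k, the map M_a (x, s) = (a x + (r + s) sqrt a, r) with r = tr (a x^2) on
  GF(2^k) \<oplus> GF(2), read through the trace form, is self-adjoint and alternating, and for X \<noteq> 0
  the map a \<mapsto> M_a X is injective; so it hits every vector orthogonal to X.\<close>

definition hyp_last :: "(nat \<Rightarrow> gf2) \<Rightarrow> (nat \<Rightarrow> gf2) \<Rightarrow> gf2" where
  "hyp_last a X = trace (poly_of_vec k a * (poly_of_vec k X)^2)"

definition hyp_poly :: "(nat \<Rightarrow> gf2) \<Rightarrow> (nat \<Rightarrow> gf2) \<Rightarrow> gf2 poly" where
  "hyp_poly a X = poly_of_vec k a * poly_of_vec k X + smult (hyp_last a X + X k) (sqrt_mod (poly_of_vec k a))"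

definition hyp_map :: "(nat \<Rightarrow> gf2) \<Rightarrow> (nat \<Rightarrow> gf2) \<Rightarrow> nat \<Rightarrow> gf2" where
  "hyp_map a X = (\<lambda>i. if i < k then trace (monom 1 i * hyp_poly a X) else if i = k then hyp_last a X else 0)"

lemma hyp_map_in_vecs: "hyp_map a X \<in> vecs (Suc k)"
  unfolding hyp_map_def vecs_def by auto

context
  assumes ok: "odd k"
begin

lemma dotp_hyp_map: "dotp (Suc k) Y (hyp_map a X) = trace (poly_of_vec k Y * hyp_poly a X) + Y k * hyp_last a X"
proof -
  have "dotp k Y (hyp_map a X) = dotp k Y (coord_vec trace (hyp_poly a X))"
    unfolding dotp_def hyp_map_def coord_vec_def by (rule sum.cong) auto
  also have "\<dots> = trace (poly_of_vec k Y * hyp_poly a X)" by (rule dotp_coord_vec[OF nondegenerate_trace[OF ok]])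
  finally show ?thesis unfolding dotp_Suc by (simp add: hyp_map_def)
qed

lemma trace_mult_sqrt_mod: "trace (q * sqrt_mod p) = trace (p * q^2)"
proof -
  have "trace (q * sqrt_mod p) = trace ((q * sqrt_mod p)^2)" by (rule trace_square[symmetric])
  also have "\<dots> = trace (q^2 * (sqrt_mod p)^2)" by (simp add: power_mult_distrib)
  also have "\<dots> = trace (q^2 * p)"
  proof (rule trace_cong)
    have "q^2 * (sqrt_mod p)^2 - q^2 * p = q^2 * ((sqrt_mod p)^2 - p)" by (simp add: algebra_simps)
    then show "f dvd q^2 * (sqrt_mod p)^2 - q^2 * p" using sqrt_mod_square by simp
  qed
  finally show ?thesis by (simp add: mult.commute)
qed

lemma trace_hyp_poly:
  "trace (poly_of_vec k Y * hyp_poly a X)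
     = trace (poly_of_vec k Y * poly_of_vec k a * poly_of_vec k X) + (hyp_last a X + X k) * hyp_last a Y"
proof -
  let ?a = "poly_of_vec k a" and ?X = "poly_of_vec k X" and ?Y = "poly_of_vec k Y"
  have "?Y * hyp_poly a X = ?Y * ?a * ?X + smult (hyp_last a X + X k) (?Y * sqrt_mod ?a)"
    unfolding hyp_poly_def by (simp add: algebra_simps)
  then have "trace (?Y * hyp_poly a X)
      = trace (?Y * ?a * ?X) + (hyp_last a X + X k) * trace (?Y * sqrt_mod ?a)"
    by (simp add: trace_add trace_smult)
  moreover have "trace (?Y * sqrt_mod ?a) = hyp_last a Y"
    unfolding hyp_last_def by (rule trace_mult_sqrt_mod)
  ultimately show ?thesis by simp
qed

lemma hyp_map_sym: "dotp (Suc k) Y (hyp_map a X) = dotp (Suc k) X (hyp_map a Y)"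
proof -
  let ?a = "poly_of_vec k a" and ?X = "poly_of_vec k X" and ?Y = "poly_of_vec k Y"
  have "trace (?Y * ?a * ?X) = trace (?X * ?a * ?Y)" by (simp add: ac_simps)
  then show ?thesis unfolding dotp_hyp_map trace_hyp_poly by (simp add: algebra_simps)
qed

lemma hyp_map_isotropic: "dotp (Suc k) X (hyp_map a X) = 0"
proof -
  have T: "trace (poly_of_vec k X * poly_of_vec k a * poly_of_vec k X) = hyp_last a X" unfolding hyp_last_def
    by (simp add: ac_simps power2_eq_square)
  show ?thesis unfolding dotp_hyp_map trace_hyp_poly T by (simp add: algebra_simps gf2_two)
qed

text \<open>Squaring turns c p + sqrt c into c (c p^2 + 1) modulo f.\<close>

lemma trace_mult_square_eq_1:
  assumes cf: "\<not> f dvd c" and dv: "f dvd c * p + sqrt_mod c"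
  shows "trace (c * p^2) = 1"
proof -
  have "(c * p + sqrt_mod c)^2 = c^2 * p^2 + (sqrt_mod c)^2"
    using gf2_poly_add_power_two[of "c * p" "sqrt_mod c" 1] by (simp add: power_mult_distrib)
  moreover have "f dvd (c * p + sqrt_mod c)^2" using dv by (simp add: power2_eq_square)
  ultimately have "f dvd c^2 * p^2 + (sqrt_mod c)^2" by simp
  moreover have "f dvd (sqrt_mod c)^2 + c" using sqrt_mod_square[of c] by (simp add: gf2_poly_minus)
  ultimately have "f dvd (c^2 * p^2 + (sqrt_mod c)^2) + ((sqrt_mod c)^2 + c)" by (rule dvd_add)
  moreover have "(c^2 * p^2 + (sqrt_mod c)^2) + ((sqrt_mod c)^2 + c) = c * (c * p^2 + 1)"
    by (simp add: algebra_simps power2_eq_square)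
  ultimately have "f dvd c * (c * p^2 + 1)" by simp
  then have "f dvd c * p^2 + 1" using cf f_dvd_mult by blast
  then have "trace (c * p^2 + 1) = 0" by (rule trace_dvd)
  then have "trace (c * p^2) + 1 = 0" using trace_one[OF ok] by (simp add: trace_add)
  then show ?thesis using gf2_cases[of "trace (c * p^2)"] by auto
qed

lemma hyp_map_inj:
  assumes a: "a \<in> vecs k" and b: "b \<in> vecs k" and X: "X \<in> vecs (Suc k)" "X \<noteq> (\<lambda>i. 0)"
    and e: "hyp_map a X = hyp_map b X"
  shows "a = b"
proof (rule ccontr)
  assume ne: "a \<noteq> b"
  define c where "c = poly_of_vec k a + poly_of_vec k b"
  define pX where "pX = poly_of_vec k X"
  define r where "r = hyp_last a X"
  define t where "t = r + X k"
  have dc: "degree c < k" unfolding c_def using degree_poly_of_vec_less[OF degree_pos] by (simp add: degree_add_less)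
  have cf: "\<not> f dvd c"
  proof
    assume "f dvd c"
    then have "c = 0" using dvd_degree_less dc by blast
    then have "poly_of_vec k a = poly_of_vec k b" unfolding c_def by (metis add_eq_0_iff gf2_poly_uminus)
    then show False using poly_of_vec_inj[OF a b] ne by simp
  qed
  have rr: "hyp_last b X = r" using fun_cong[OF e, of k] unfolding r_def hyp_map_def by simp
  have "coord_vec trace (hyp_poly a X) = coord_vec trace (hyp_poly b X)"
  proof
    fix i show "coord_vec trace (hyp_poly a X) i = coord_vec trace (hyp_poly b X) i"
      using fun_cong[OF e, of i] unfolding hyp_map_def coord_vec_def by (cases "i < k") auto
  qed
  then have "f dvd hyp_poly a X - hyp_poly b X" by (rule coord_vec_eq_imp_dvd[OF nondegenerate_trace[OF ok]])
  moreover have "hyp_poly a X - hyp_poly b X = c * pX + smult t (sqrt_mod c)"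
    unfolding hyp_poly_def c_def pX_def t_def rr[folded r_def] r_def sqrt_mod_add
    by (simp add: gf2_poly_minus algebra_simps smult_add_right)
  ultimately have dv: "f dvd c * pX + smult t (sqrt_mod c)" by simp
  show False
  proof (cases "t = 0")
    case True
    then have "f dvd c * pX" using dv by simp
    then have "f dvd pX" using cf f_dvd_mult by blast
    then have "pX = 0" using dvd_degree_less degree_poly_of_vec_less[OF degree_pos] unfolding pX_def by blast
    then have X0: "\<forall>i<k. X i = 0" unfolding pX_def by (metis coeff_poly_of_vec coeff_0)
    have "r = 0" unfolding r_def hyp_last_def using \<open>pX = 0\<close> unfolding pX_def by (simp add: trace_zero)
    then have "X k = 0" using True unfolding t_def by simp
    then have "X = (\<lambda>i. 0)" using X0 X(1) unfolding vecs_def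
      by (auto intro!: ext) (metis less_Suc_eq not_le)
    then show False using X(2) by simp
  next
    case False
    then have "f dvd c * pX + sqrt_mod c" using dv gf2_neq_0_iff by simp
    then have "trace (c * pX^2) = 1" by (rule trace_mult_square_eq_1[OF cf])
    moreover have "trace (c * pX^2) = r + hyp_last b X" unfolding c_def pX_def r_def hyp_last_def
      by (simp add: distrib_right trace_add)
    ultimately show False using rr by simp
  qed
qed

lemma hyp_map_surj:
  assumes X: "X \<in> vecs (Suc k)" "X \<noteq> (\<lambda>i. 0)" and Y: "Y \<in> vecs (Suc k)"
    and XY: "dotp (Suc k) X Y = 0"
  shows "\<exists>a\<in>vecs k. hyp_map a X = Y"
proof -
  define T where "T = {Z \<in> vecs (Suc k). dotp (Suc k) X Z = 0}"
  have cT: "card T = 2^(Suc k) div 2" unfolding T_def by (rule card_dotp_level[OF X])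
  have sub: "(\<lambda>a. hyp_map a X) ` vecs k \<subseteq> T" unfolding T_def using hyp_map_in_vecs hyp_map_isotropic by auto
  have inj: "inj_on (\<lambda>a. hyp_map a X) (vecs k)"
    by (rule inj_onI) (rule hyp_map_inj[OF _ _ X], assumption+)
  have "card ((\<lambda>a. hyp_map a X) ` vecs k) = 2^k" using card_image[OF inj] card_vecs by simp
  moreover have "finite T" unfolding T_def using finite_vecs by simp
  ultimately have "(\<lambda>a. hyp_map a X) ` vecs k = T" using card_subset_eq[OF _ sub] cT by simp
  moreover have "Y \<in> T" unfolding T_def using Y XY by simp
  ultimately show ?thesis by blast
qed

end

end

section \<open>Quadratic forms over GF(2)\<close>

text \<open>Since z is odd, a G a^t reduces to quad_form and a (G + G^t) b^t to polar_form.\<close>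

definition aniso_part :: "nat \<Rightarrow> gf2 \<Rightarrow> gf2 \<Rightarrow> gf2" where
  "aniso_part \<delta> z w = (if \<delta> = 1 then z * z else if \<delta> = 2 then z * z + z * w + w * w else 0)"

definition quad_form :: "nat \<Rightarrow> nat \<Rightarrow> (nat \<Rightarrow> gf2) \<Rightarrow> gf2" where
  "quad_form \<nu> \<delta> u = dotp \<nu> u (\<lambda>i. u (\<nu> + i)) + aniso_part \<delta> (u (2*\<nu>)) (u (2*\<nu>+1))"

definition polar_form :: "nat \<Rightarrow> nat \<Rightarrow> (nat \<Rightarrow> gf2) \<Rightarrow> (nat \<Rightarrow> gf2) \<Rightarrow> gf2" where
  "polar_form \<nu> \<delta> u v = dotp \<nu> u (\<lambda>i. v (\<nu> + i)) + dotp \<nu> (\<lambda>i. u (\<nu> + i)) v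
     + (if \<delta> = 2 then u (2*\<nu>) * v (2*\<nu>+1) + u (2*\<nu>+1) * v (2*\<nu>) else 0)"

definition singular_vecs :: "nat \<Rightarrow> nat \<Rightarrow> (nat \<Rightarrow> gf2) set" where
  "singular_vecs \<nu> \<delta> = {u \<in> vecs (2*\<nu>+\<delta>). u \<noteq> (\<lambda>i. 0) \<and> quad_form \<nu> \<delta> u = 0}"

abbreviation polar_adj :: "nat \<Rightarrow> nat \<Rightarrow> (nat \<Rightarrow> gf2) \<Rightarrow> (nat \<Rightarrow> gf2) \<Rightarrow> bool" where
  "polar_adj \<nu> \<delta> u v \<equiv> polar_form \<nu> \<delta> u v \<noteq> 0"

lemma quad_form_vadd: "quad_form \<nu> \<delta> (vadd u v) = quad_form \<nu> \<delta> u + quad_form \<nu> \<delta> v + polar_form \<nu> \<delta> u v"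
proof -
  have d: "dotp \<nu> (vadd u v) (\<lambda>i. vadd u v (\<nu> + i)) = dotp \<nu> u (\<lambda>i. u (\<nu> + i)) + dotp \<nu> v (\<lambda>i. v (\<nu> + i))
      + dotp \<nu> u (\<lambda>i. v (\<nu> + i)) + dotp \<nu> (\<lambda>i. u (\<nu> + i)) v"
    unfolding dotp_def vadd_def sum.distrib[symmetric]
    by (rule sum.cong) (simp_all add: algebra_simps)
  show ?thesis unfolding quad_form_def polar_form_def d unfolding aniso_part_def vadd_def
    by (simp add: algebra_simps gf2_two)
qed

lemma polar_form_self: "polar_form \<nu> \<delta> u u = 0"
  unfolding polar_form_def dotp_def by (simp add: mult.commute gf2_two)

lemma polar_form_vadd: "polar_form \<nu> \<delta> u (vadd v w) = polar_form \<nu> \<delta> u v + polar_form \<nu> \<delta> u w"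
  unfolding polar_form_def dotp_def vadd_def by (simp add: algebra_simps sum.distrib)

lemma polar_form_eq: "polar_form \<nu> \<delta> u v = quad_form \<nu> \<delta> (vadd u v) - quad_form \<nu> \<delta> u - quad_form \<nu> \<delta> v"
  using quad_form_vadd[of \<nu> \<delta> u v] by (simp add: algebra_simps gf2_two)

lemma finite_singular_vecs: "finite (singular_vecs \<nu> \<delta>)"
  unfolding singular_vecs_def using finite_vecs by simp

section \<open>Totally singular subspaces\<close>

definition supported_in :: "nat \<Rightarrow> nat \<Rightarrow> nat \<Rightarrow> (nat \<Rightarrow> gf2) set" where
  "supported_in \<nu> \<delta> k = {u. \<forall>i. u i \<noteq> 0 \<longrightarrow> (i < k \<or> (\<nu> \<le> i \<and> i < \<nu> + k) \<or> (2*\<nu> \<le> i \<and> i < 2*\<nu> + \<delta>))}"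

definition totally_singular :: "nat \<Rightarrow> nat \<Rightarrow> (nat \<Rightarrow> gf2) set \<Rightarrow> bool" where
  "totally_singular \<nu> \<delta> W \<longleftrightarrow> (\<forall>x\<in>W. \<forall>y\<in>W. vadd x y \<in> W) \<and> (\<forall>w\<in>W. quad_form \<nu> \<delta> w = 0)"

lemma aniso_part_eq_0: "\<delta> \<le> 2 \<Longrightarrow> aniso_part \<delta> z w = 0 \<Longrightarrow> (\<delta> \<ge> 1 \<longrightarrow> z = 0) \<and> (\<delta> \<ge> 2 \<longrightarrow> w = 0)"
  unfolding aniso_part_def using gf2_cases[of z] gf2_cases[of w]
  by (cases "\<delta> = 0"; cases "\<delta> = 1"; auto simp: gf2_two)

lemma singular_hyperbolic_part_zero:
  assumes d: "\<delta> \<le> 2" and Q: "quad_form \<nu> \<delta> u = 0"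
    and hyp: "\<forall>i<\<nu>. u i = 0 \<and> u (\<nu>+i) = 0" and supp: "\<forall>i. u i \<noteq> 0 \<longrightarrow> i < 2*\<nu>+\<delta>"
  shows "u = (\<lambda>i. 0)"
proof
  fix i
  have "dotp \<nu> u (\<lambda>i. u (\<nu> + i)) = 0" unfolding dotp_def using hyp by simp
  then have "aniso_part \<delta> (u (2*\<nu>)) (u (2*\<nu>+1)) = 0" using Q unfolding quad_form_def by simp
  from aniso_part_eq_0[OF d this]
  have "\<delta> \<ge> 1 \<longrightarrow> u (2*\<nu>) = 0" "\<delta> \<ge> 2 \<longrightarrow> u (2*\<nu>+1) = 0" by auto
  note aniso = this
  show "u i = 0"
  proof (rule ccontr)
    assume ui: "u i \<noteq> 0"
    have "\<not> (\<nu> \<le> i \<and> i < 2*\<nu>)"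
    proof
      assume "\<nu> \<le> i \<and> i < 2*\<nu>"
      then have "i - \<nu> < \<nu>" "\<nu> + (i - \<nu>) = i" by auto
      then show False using hyp ui by metis
    qed
    moreover have "i < 2*\<nu>+\<delta>" "\<not> i < \<nu>" using supp hyp ui by auto
    ultimately have "(i = 2*\<nu> \<and> \<delta> \<ge> 1) \<or> (i = 2*\<nu>+1 \<and> \<delta> \<ge> 2)" using d by linarith
    then show False using aniso ui by auto
  qed
qed

lemma card_le_twice_image:
  assumes "finite A" "W \<subseteq> A \<union> g ` A"
  shows "card W \<le> 2 * card A"
proof -
  have "card W \<le> card (A \<union> g ` A)" using assms by (intro card_mono) auto
  also have "\<dots> \<le> card A + card (g ` A)" by (rule card_Un_le)
  also have "\<dots> \<le> 2 * card A" using card_image_le[OF assms(1), of g] by simp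
  finally show ?thesis .
qed

lemma totally_singular_polar_form:
  assumes W: "totally_singular \<nu> \<delta> W" and "x \<in> W" "y \<in> W"
  shows "polar_form \<nu> \<delta> x y = 0"
proof -
  have "vadd x y \<in> W" "quad_form \<nu> \<delta> x = 0" "quad_form \<nu> \<delta> y = 0" "quad_form \<nu> \<delta> (vadd x y) = 0"
    using assms unfolding totally_singular_def by blast+
  then show ?thesis using quad_form_vadd[of \<nu> \<delta> x y] by simp
qed

lemma polar_form_unit_vec:
  assumes "p < \<nu>"
  shows "polar_form \<nu> \<delta> (\<lambda>i. if i = p then 1 else 0) w = w (\<nu>+p)"
proof -
  have "(\<Sum>i<\<nu>. (if i = p then 1 else 0) * w (\<nu> + i)) = (\<Sum>i<\<nu>. if i = p then w (\<nu> + p) else 0)"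
    by (rule sum.cong) auto
  then have "(\<Sum>i<\<nu>. (if i = p then 1 else 0) * w (\<nu> + i)) = w (\<nu>+p)"
    using assms by simp
  moreover have "(\<Sum>i<\<nu>. (if \<nu> + i = p then 1 else 0) * w i) = 0"
    by (rule sum.neutral) (use assms in auto)
  ultimately show ?thesis using assms unfolding polar_form_def dotp_def by simp
qed

lemma clear_coord_inj_on:
  assumes W: "totally_singular \<nu> \<delta> W" and w0: "w0 \<in> W" "w0 (\<nu>+p) \<noteq> 0" and p: "p < \<nu>"
  shows "inj_on (\<lambda>w. w(p := 0)) W"
proof (rule inj_onI, rule ccontr)
  fix x y assume x: "x \<in> W" and y: "y \<in> W" and e: "x(p := 0) = y(p := 0)" and ne: "x \<noteq> y"
  have xy: "x i = y i" if "i \<noteq> p" for i using fun_cong[OF e, of i] that by simp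
  then have "x p \<noteq> y p" using ne by (metis ext)
  then have "vadd x y = (\<lambda>i. if i = p then 1 else 0)"
    using xy gf2_cases[of "x p"] gf2_cases[of "y p"] by (auto simp: vadd_def gf2_two)
  moreover have "vadd x y \<in> W" using W x y unfolding totally_singular_def by blast
  ultimately have "polar_form \<nu> \<delta> (\<lambda>i. if i = p then 1 else 0) w0 = 0"
    using totally_singular_polar_form[OF W _ w0(1)] by simp
  then show False using polar_form_unit_vec[OF p] w0(2) by simp
qed

lemma totally_singular_clear_coord:
  assumes W: "totally_singular \<nu> \<delta> W" and p: "p < \<nu>"
  shows "totally_singular \<nu> \<delta> ((\<lambda>w. w(p := 0)) ` {w\<in>W. w (\<nu>+p) = 0})"
  unfolding totally_singular_def
proof (intro conjI ballI)
  fix x y assume "x \<in> (\<lambda>w. w(p := 0)) ` {w\<in>W. w (\<nu>+p) = 0}" "y \<in> (\<lambda>w. w(p := 0)) ` {w\<in>W. w (\<nu>+p) = 0}"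
  then obtain a b where ab: "a \<in> W" "b \<in> W" "a (\<nu>+p) = 0" "b (\<nu>+p) = 0" "x = a(p := 0)" "y = b(p := 0)"
    by auto
  have "vadd a b \<in> W" using W ab unfolding totally_singular_def by blast
  moreover have "vadd x y = (vadd a b)(p := 0)" unfolding ab vadd_def by auto
  ultimately show "vadd x y \<in> (\<lambda>w. w(p := 0)) ` {w\<in>W. w (\<nu>+p) = 0}"
    using ab unfolding vadd_def by auto
next
  fix x assume "x \<in> (\<lambda>w. w(p := 0)) ` {w\<in>W. w (\<nu>+p) = 0}"
  then obtain w where w: "w \<in> W" "w (\<nu>+p) = 0" "x = w(p := 0)" by auto
  have "dotp \<nu> x (\<lambda>i. x (\<nu> + i)) = dotp \<nu> w (\<lambda>i. w (\<nu> + i))"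
    unfolding dotp_def w(3) by (rule sum.cong) (use w(2) p in auto)
  then have "quad_form \<nu> \<delta> x = quad_form \<nu> \<delta> w" using p unfolding quad_form_def w(3) by simp
  then show "quad_form \<nu> \<delta> x = 0" using W w(1) unfolding totally_singular_def by simp
qed

lemma totally_singular_card_le:
  assumes "k \<le> \<nu>" "\<delta> \<le> 2" "W \<subseteq> supported_in \<nu> \<delta> k" "finite W" "totally_singular \<nu> \<delta> W"
  shows "card W \<le> 2^k"
  using assms
proof (induction k arbitrary: W)
  case 0
  have "w = (\<lambda>i. 0)" if "w \<in> W" for w
  proof (rule singular_hyperbolic_part_zero[OF 0(2)])
    show "quad_form \<nu> \<delta> w = 0" using 0(5) that unfolding totally_singular_def by blast
    show "\<forall>i<\<nu>. w i = 0 \<and> w (\<nu>+i) = 0" "\<forall>i. w i \<noteq> 0 \<longrightarrow> i < 2*\<nu>+\<delta>"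
      using 0(3) that unfolding supported_in_def by force+
  qed
  then have "W \<subseteq> {\<lambda>i. 0}" by blast
  then show ?case using card_mono[of "{\<lambda>i. 0}" W] by simp
next
  case (Suc k)
  define W1 where "W1 = {w\<in>W. w (\<nu>+k) = 0}"
  define W' where "W' = (\<lambda>w. w(k := 0)) ` W1"
  have k: "k < \<nu>" using Suc.prems(1) by simp
  have fW1: "finite W1" "finite W'" unfolding W'_def W1_def using Suc.prems(4) by simp_all
  have "W' \<subseteq> supported_in \<nu> \<delta> k"
  proof
    fix x assume "x \<in> W'"
    then obtain w where w: "w \<in> W" "w (\<nu>+k) = 0" "x = w(k := 0)" unfolding W'_def W1_def by auto
    then have "w \<in> supported_in \<nu> \<delta> (Suc k)" using Suc.prems(3) by auto
    then show "x \<in> supported_in \<nu> \<delta> k"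
      unfolding supported_in_def w(3) using w(2) by (auto simp: less_Suc_eq)
  qed
  moreover have "totally_singular \<nu> \<delta> W'"
    unfolding W'_def W1_def by (rule totally_singular_clear_coord[OF Suc.prems(5) k])
  ultimately have IH: "card W' \<le> 2^k" using Suc.IH Suc.prems(1,2) fW1 by simp
  have "card W \<le> 2 * card W'"
  proof (cases "\<exists>w0\<in>W. w0 (\<nu>+k) \<noteq> 0")
    case True
    then obtain w0 where w0: "w0 \<in> W" "w0 (\<nu>+k) \<noteq> 0" by auto
    have "W \<subseteq> W1 \<union> (\<lambda>w. vadd w w0) ` W1"
    proof
      fix w assume w: "w \<in> W"
      have "vadd w w0 \<in> W1" if "w (\<nu>+k) \<noteq> 0"
        using w w0 that Suc.prems(5) gf2_neq_0_iff unfolding W1_def totally_singular_def vadd_def by auto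
      moreover have "w = vadd (vadd w w0) w0" by (simp add: vadd_cancel)
      ultimately show "w \<in> W1 \<union> (\<lambda>w. vadd w w0) ` W1" using w unfolding W1_def by blast
    qed
    then have "card W \<le> 2 * card W1" by (rule card_le_twice_image[OF fW1(1)])
    moreover have "inj_on (\<lambda>w. w(k := 0)) W1"
      using clear_coord_inj_on[OF Suc.prems(5) w0 k] unfolding W1_def by (rule inj_on_subset) auto
    ultimately show ?thesis unfolding W'_def by (simp add: card_image)
  next
    case False
    then have "W = W1" unfolding W1_def by auto
    moreover have "W1 \<subseteq> W' \<union> (\<lambda>w. w(k := 1)) ` W'"
    proof
      fix w assume w: "w \<in> W1"
      have "w = w(k := 0) \<or> w = (w(k := 0))(k := 1)"
        using gf2_cases[of "w k"] by (auto simp: fun_upd_idem)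
      then show "w \<in> W' \<union> (\<lambda>w. w(k := 1)) ` W'" using w unfolding W'_def by blast
    qed
    ultimately show ?thesis using card_le_twice_image[OF fW1(2)] by simp
  qed
  then show ?case using IH by simp
qed

inductive_set gf2_span :: "(nat \<Rightarrow> gf2) set \<Rightarrow> (nat \<Rightarrow> gf2) set" for I where
  zero: "(\<lambda>i. 0) \<in> gf2_span I"
| add: "v \<in> I \<Longrightarrow> w \<in> gf2_span I \<Longrightarrow> vadd v w \<in> gf2_span I"

lemma gf2_span_vadd: "x \<in> gf2_span I \<Longrightarrow> y \<in> gf2_span I \<Longrightarrow> vadd x y \<in> gf2_span I"
proof (induction x rule: gf2_span.induct)
  case zero then show ?case by (simp add: vadd_def)
next
  case (add v w)
  have "vadd (vadd v w) y = vadd v (vadd w y)" unfolding vadd_def by (simp add: add.assoc)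
  then show ?case using add by (simp add: gf2_span.add)
qed

lemma gf2_span_subset_vecs: "I \<subseteq> vecs m \<Longrightarrow> gf2_span I \<subseteq> vecs m"
proof
  fix w assume "w \<in> gf2_span I" "I \<subseteq> vecs m"
  then show "w \<in> vecs m" by (induction w rule: gf2_span.induct) (auto simp: zero_in_vecs vadd_in_vecs)
qed

lemma totally_singular_gf2_span:
  assumes orth: "\<forall>u\<in>I. \<forall>v\<in>I. polar_form \<nu> \<delta> u v = 0" and sing: "\<forall>u\<in>I. quad_form \<nu> \<delta> u = 0"
  shows "totally_singular \<nu> \<delta> (gf2_span I)"
proof -
  have polar: "polar_form \<nu> \<delta> u w = 0" if "u \<in> I" "w \<in> gf2_span I" for u w
    using that(2)
  proof (induction w rule: gf2_span.induct)
    case zero then show ?case by (simp add: polar_form_def dotp_def)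
  next
    case (add v w) then show ?case using orth that(1) by (simp add: polar_form_vadd)
  qed
  have "quad_form \<nu> \<delta> w = 0" if "w \<in> gf2_span I" for w
    using that
  proof (induction w rule: gf2_span.induct)
    case zero then show ?case by (simp add: quad_form_def dotp_def aniso_part_def)
  next
    case (add v w) then show ?case using sing polar by (simp add: quad_form_vadd)
  qed
  then show ?thesis unfolding totally_singular_def using gf2_span_vadd by blast
qed

lemma vecs_subset_supported_in: "vecs (2*\<nu>+\<delta>) \<subseteq> supported_in \<nu> \<delta> \<nu>"
  unfolding vecs_def supported_in_def by (auto simp: not_le[symmetric])

lemma orthogonal_singular_card_le:
  assumes d: "\<delta> \<le> 2" and I: "I \<subseteq> singular_vecs \<nu> \<delta>"
    and orth: "\<forall>u\<in>I. \<forall>v\<in>I. polar_form \<nu> \<delta> u v = 0"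
  shows "card I \<le> 2^\<nu> - 1"
proof -
  have span: "gf2_span I \<subseteq> vecs (2*\<nu>+\<delta>)"
    using I by (intro gf2_span_subset_vecs) (auto simp: singular_vecs_def)
  then have fin: "finite (gf2_span I)" using finite_vecs finite_subset by blast
  have "totally_singular \<nu> \<delta> (gf2_span I)"
    using I orth by (intro totally_singular_gf2_span) (auto simp: singular_vecs_def)
  then have "card (gf2_span I) \<le> 2^\<nu>"
    using span vecs_subset_supported_in fin by (intro totally_singular_card_le[OF le_refl d]) auto
  moreover have "I \<subseteq> gf2_span I - {\<lambda>i. 0}"
  proof
    fix v assume v: "v \<in> I"
    have "vadd v (\<lambda>i. 0) = v" unfolding vadd_def by simp
    then have "v \<in> gf2_span I" using gf2_span.add[OF v gf2_span.zero] by simp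
    then show "v \<in> gf2_span I - {\<lambda>i. 0}" using v I unfolding singular_vecs_def by auto
  qed
  then have "card I \<le> card (gf2_span I) - 1"
    using fin gf2_span.zero by (metis card_Diff_singleton card_mono finite_Diff)
  ultimately show ?thesis by simp
qed

section \<open>Counting singular vectors\<close>

definition dotp_level :: "nat \<Rightarrow> gf2 \<Rightarrow> ((nat \<Rightarrow> gf2) \<times> (nat \<Rightarrow> gf2)) set" where
  "dotp_level \<nu> c = {p \<in> vecs \<nu> \<times> vecs \<nu>. dotp \<nu> (fst p) (snd p) = c}"

lemma finite_dotp_level: "finite (dotp_level \<nu> c)"
  unfolding dotp_level_def using finite_vecs by simp

lemma card_dotp_level_set:
  assumes "\<nu> \<ge> 1" "c = 0 \<or> c = 1"
  shows "card (dotp_level \<nu> c) = (if c = 0 then 2^\<nu> else 0) + (2^\<nu> - 1) * (2^\<nu> div 2)"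
proof -
  define B where "B X = {Y\<in>vecs \<nu>. dotp \<nu> X Y = c}" for X
  have "dotp_level \<nu> c = Sigma (vecs \<nu>) B" unfolding dotp_level_def B_def by auto
  then have "card (dotp_level \<nu> c) = (\<Sum>X\<in>vecs \<nu>. card (B X))"
    using card_SigmaI[of "vecs \<nu>" B] finite_vecs unfolding B_def by simp
  also have "\<dots> = card (B (\<lambda>i. 0)) + (\<Sum>X\<in>vecs \<nu> - {\<lambda>i. 0}. card (B X))"
    using sum.remove[OF finite_vecs, of "\<lambda>i. 0"] vecs_def by (simp add: vecs_def)
  also have "(\<Sum>X\<in>vecs \<nu> - {\<lambda>i. 0}. card (B X)) = (\<Sum>X\<in>vecs \<nu> - {\<lambda>i. 0}. 2^\<nu> div 2)"
    by (rule sum.cong) (auto simp: B_def intro!: card_dotp_level assms(2))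
  also have "\<dots> = (2^\<nu> - 1) * (2^\<nu> div 2)"
    using card_vecs[of \<nu>] finite_vecs by (simp add: vecs_def card_Diff_singleton)
  also have "card (B (\<lambda>i. 0)) = (if c = 0 then 2^\<nu> else 0)"
    unfolding B_def dotp_def using card_vecs by auto
  finally show ?thesis .
qed

definition join_vec :: "nat \<Rightarrow> (nat \<Rightarrow> gf2) \<Rightarrow> (nat \<Rightarrow> gf2) \<Rightarrow> gf2 \<Rightarrow> gf2 \<Rightarrow> nat \<Rightarrow> gf2" where
  "join_vec \<nu> X Y z w = (\<lambda>i. if i < \<nu> then X i else if i < 2*\<nu> then Y (i - \<nu>)
      else if i = 2*\<nu> then z else if i = 2*\<nu>+1 then w else 0)"

lemma quad_form_join_vec: "quad_form \<nu> \<delta> (join_vec \<nu> X Y z w) = dotp \<nu> X Y + aniso_part \<delta> z w"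
proof -
  have "dotp \<nu> (join_vec \<nu> X Y z w) (\<lambda>i. join_vec \<nu> X Y z w (\<nu> + i)) = dotp \<nu> X Y"
    unfolding dotp_def by (rule sum.cong) (auto simp: join_vec_def)
  moreover have "join_vec \<nu> X Y z w (2*\<nu>) = z" "join_vec \<nu> X Y z w (2*\<nu>+1) = w" by (auto simp: join_vec_def)
  ultimately show ?thesis unfolding quad_form_def by simp
qed

lemma join_vec_inj:
  assumes "X \<in> vecs \<nu>" "Y \<in> vecs \<nu>" "X' \<in> vecs \<nu>" "Y' \<in> vecs \<nu>" "join_vec \<nu> X Y z w = join_vec \<nu> X' Y' z' w'"
  shows "X = X' \<and> Y = Y' \<and> z = z' \<and> w = w'"
proof (intro conjI)
  note e = fun_cong[OF assms(5)]
  show "X = X'"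
  proof
    fix i show "X i = X' i"
      using e[of i] assms(1,3) unfolding join_vec_def vecs_def by (cases "i < \<nu>") auto
  qed
  show "Y = Y'"
  proof
    fix i show "Y i = Y' i"
      using e[of "\<nu>+i"] assms(2,4) unfolding join_vec_def vecs_def by (cases "i < \<nu>") auto
  qed
  show "z = z'" using e[of "2*\<nu>"] unfolding join_vec_def by simp
  show "w = w'" using e[of "2*\<nu>+1"] unfolding join_vec_def by simp
qed

lemma join_vec_in_vecs:
  assumes "X \<in> vecs \<nu>" "Y \<in> vecs \<nu>" "\<delta> = 0 \<longrightarrow> z = 0" "\<delta> \<le> 1 \<longrightarrow> w = 0" "\<delta> \<le> 2"
  shows "join_vec \<nu> X Y z w \<in> vecs (2*\<nu>+\<delta>)"
  using assms unfolding vecs_def join_vec_def by auto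

lemma card_le_singular_vecs:
  assumes T: "T \<subseteq> vecs \<nu> \<times> vecs \<nu> \<times> UNIV \<times> UNIV" "finite T"
    and good: "\<And>X Y z w. (X, Y, z, w) \<in> T \<Longrightarrow> join_vec \<nu> X Y z w \<in> vecs (2*\<nu>+\<delta>) \<and> quad_form \<nu> \<delta> (join_vec \<nu> X Y z w) = 0"
  shows "card T \<le> card (singular_vecs \<nu> \<delta>) + 1"
proof -
  define F where "F = (\<lambda>(X, Y, z, w). join_vec \<nu> X Y z w)"
  have "inj_on F T"
  proof (rule inj_onI)
    fix p q assume p: "p \<in> T" and q: "q \<in> T" and e: "F p = F q"
    obtain X Y z w where pp: "p = (X, Y, z, w)" by (cases p) auto
    obtain X' Y' z' w' where qq: "q = (X', Y', z', w')" by (cases q) auto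
    show "p = q" using join_vec_inj[of X \<nu> Y X' Y' z w z' w'] p q T(1) e unfolding pp qq F_def by auto
  qed
  moreover have "F ` T \<subseteq> singular_vecs \<nu> \<delta> \<union> {\<lambda>i. 0}"
  proof
    fix v assume "v \<in> F ` T"
    then obtain X Y z w where t: "(X, Y, z, w) \<in> T" "v = join_vec \<nu> X Y z w" unfolding F_def by auto
    then show "v \<in> singular_vecs \<nu> \<delta> \<union> {\<lambda>i. 0}" using good[OF t(1)] unfolding singular_vecs_def by auto
  qed
  ultimately have "card T \<le> card (singular_vecs \<nu> \<delta> \<union> {\<lambda>i. 0})"
    using card_inj_on_le finite_singular_vecs by (metis finite_insert insert_is_Un sup_commute)
  also have "\<dots> \<le> card (singular_vecs \<nu> \<delta>) + 1" using card_Un_le[of "singular_vecs \<nu> \<delta>" "{\<lambda>i. 0}"] by simp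
  finally show ?thesis .
qed

definition with_tail :: "gf2 \<Rightarrow> gf2 \<Rightarrow> (nat \<Rightarrow> gf2) \<times> (nat \<Rightarrow> gf2) \<Rightarrow> (nat \<Rightarrow> gf2) \<times> (nat \<Rightarrow> gf2) \<times> gf2 \<times> gf2" where
  "with_tail z w p = (fst p, snd p, z, w)"

lemma inj_on_with_tail: "inj_on (with_tail z w) A"
  unfolding with_tail_def by (rule inj_onI) (auto simp: prod_eq_iff)

lemma dotp_levelD: "(X, Y) \<in> dotp_level \<nu> c \<Longrightarrow> X \<in> vecs \<nu> \<and> Y \<in> vecs \<nu> \<and> dotp \<nu> X Y = c"
  unfolding dotp_level_def by auto

lemma card_singular_vecs_hyperbolic:
  "card (dotp_level \<nu> 0) \<le> card (singular_vecs \<nu> 0) + 1"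
proof -
  have "card (with_tail 0 0 ` dotp_level \<nu> 0) \<le> card (singular_vecs \<nu> 0) + 1"
  proof (rule card_le_singular_vecs)
    show "with_tail 0 0 ` dotp_level \<nu> 0 \<subseteq> vecs \<nu> \<times> vecs \<nu> \<times> UNIV \<times> UNIV"
      unfolding with_tail_def dotp_level_def by auto
    show "finite (with_tail 0 0 ` dotp_level \<nu> 0)" using finite_dotp_level by simp
    fix X Y z w assume "(X, Y, z, w) \<in> with_tail 0 0 ` dotp_level \<nu> 0"
    then have "(X, Y) \<in> dotp_level \<nu> 0" "z = 0" "w = 0" unfolding with_tail_def by auto
    then show "join_vec \<nu> X Y z w \<in> vecs (2*\<nu>+0) \<and> quad_form \<nu> 0 (join_vec \<nu> X Y z w) = 0"
      using dotp_levelD join_vec_in_vecs[of X \<nu> Y 0 z w] by (auto simp: quad_form_join_vec aniso_part_def)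
  qed
  then show ?thesis by (simp add: card_image[OF inj_on_with_tail])
qed

lemma card_singular_vecs_parabolic:
  "card (vecs \<nu> \<times> vecs \<nu>) \<le> card (singular_vecs \<nu> 1) + 1"
proof -
  define T where "T = (\<lambda>(X, Y). (X, Y, dotp \<nu> X Y, 0::gf2)) ` (vecs \<nu> \<times> vecs \<nu>)"
  have "card T \<le> card (singular_vecs \<nu> 1) + 1"
  proof (rule card_le_singular_vecs)
    show "T \<subseteq> vecs \<nu> \<times> vecs \<nu> \<times> UNIV \<times> UNIV" "finite T"
      unfolding T_def using finite_vecs by auto
    fix X Y z w assume "(X, Y, z, w) \<in> T"
    then have "X \<in> vecs \<nu>" "Y \<in> vecs \<nu>" "z = dotp \<nu> X Y" "w = 0" unfolding T_def by auto
    then show "join_vec \<nu> X Y z w \<in> vecs (2*\<nu>+1) \<and> quad_form \<nu> 1 (join_vec \<nu> X Y z w) = 0"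
      using join_vec_in_vecs[of X \<nu> Y 1 z w] by (auto simp: quad_form_join_vec aniso_part_def)
  qed
  moreover have "card T = card (vecs \<nu> \<times> vecs \<nu>)"
    unfolding T_def by (rule card_image) (auto intro!: inj_onI)
  ultimately show ?thesis by simp
qed

lemma card_singular_vecs_elliptic:
  "card (dotp_level \<nu> 0) + 3 * card (dotp_level \<nu> 1) \<le> card (singular_vecs \<nu> 2) + 1"
proof -
  define T where "T = with_tail 0 0 ` dotp_level \<nu> 0 \<union> with_tail 1 0 ` dotp_level \<nu> 1
    \<union> with_tail 0 1 ` dotp_level \<nu> 1 \<union> with_tail 1 1 ` dotp_level \<nu> 1"
  have "card T \<le> card (singular_vecs \<nu> 2) + 1"
  proof (rule card_le_singular_vecs)
    show "T \<subseteq> vecs \<nu> \<times> vecs \<nu> \<times> UNIV \<times> UNIV" unfolding T_def with_tail_def dotp_level_def by auto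
    show "finite T" unfolding T_def using finite_dotp_level by simp
    fix X Y z w assume t: "(X, Y, z, w) \<in> T"
    then have "X \<in> vecs \<nu>" "Y \<in> vecs \<nu>" unfolding T_def with_tail_def dotp_level_def by auto
    moreover have "quad_form \<nu> 2 (join_vec \<nu> X Y z w) = 0"
      using t dotp_levelD unfolding T_def with_tail_def by (auto simp: quad_form_join_vec aniso_part_def gf2_two)
    ultimately show "join_vec \<nu> X Y z w \<in> vecs (2*\<nu>+2) \<and> quad_form \<nu> 2 (join_vec \<nu> X Y z w) = 0"
      using join_vec_in_vecs[of X \<nu> Y 2 z w] by simp
  qed
  moreover have "card T = card (dotp_level \<nu> 0) + 3 * card (dotp_level \<nu> 1)"
  proof -
    have f: "finite (with_tail z w ` dotp_level \<nu> c)" for z w c using finite_dotp_level by simp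
    have c: "card (with_tail z w ` dotp_level \<nu> c) = card (dotp_level \<nu> c)" for z w c
      by (rule card_image[OF inj_on_with_tail])
    have dj: "with_tail z w ` A \<inter> with_tail z' w' ` B = {}" if "(z, w) \<noteq> (z', w')" for z w z' w' A B
      using that unfolding with_tail_def by auto
    show ?thesis unfolding T_def
      by (simp add: card_Un_disjoint f c dj Int_Un_distrib2)
  qed
  ultimately show ?thesis by simp
qed

lemma card_singular_vecs_ge:
  assumes d: "\<delta> \<le> 2" and n: "\<nu> \<ge> 1"
  shows "(2^(\<nu>+\<delta>-1) + 1) * (2^\<nu> - 1) \<le> card (singular_vecs \<nu> \<delta>)"
proof -
  obtain j where j: "\<nu> = Suc j" using n by (cases \<nu>) auto
  define g where "g = (2::nat)^j - 1"
  have "(2::nat)^j = g + 1" unfolding g_def by simp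
  then have g: "(2::nat)^\<nu> = 2*g + 2" "(2::nat)^(\<nu>-1) = g + 1" "(2::nat)^\<nu> div 2 = g + 1"
    "(2::nat)^(\<nu>+1) = 4*g + 4" "(2::nat)^\<nu> - 1 = 2*g + 1"
    by (simp_all add: j)
  have Z0: "card (dotp_level \<nu> 0) = (2*g+2) + (2*g+1)*(g+1)" using card_dotp_level_set[OF n, of 0] g by simp
  have Z1: "card (dotp_level \<nu> 1) = (2*g+1)*(g+1)" using card_dotp_level_set[OF n, of 1] g by simp
  consider "\<delta> = 0" | "\<delta> = 1" | "\<delta> = 2" using d by linarith
  then show ?thesis
  proof cases
    case 1 then show ?thesis using card_singular_vecs_hyperbolic[of \<nu>] g Z0 by (simp add: algebra_simps)
  next
    case 2 then show ?thesis using card_singular_vecs_parabolic[of \<nu>] g card_vecs[of \<nu>]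
      by (simp add: card_cartesian_product algebra_simps)
  next
    case 3 then show ?thesis using card_singular_vecs_elliptic[of \<nu>] g Z0 Z1 by (simp add: algebra_simps)
  qed
qed

section \<open>Colourings\<close>

definition xpart :: "nat \<Rightarrow> (nat \<Rightarrow> gf2) \<Rightarrow> nat \<Rightarrow> gf2" where
  "xpart \<nu> u = (\<lambda>i. if i < \<nu> then u i else 0)"

definition ypart :: "nat \<Rightarrow> (nat \<Rightarrow> gf2) \<Rightarrow> nat \<Rightarrow> gf2" where
  "ypart \<nu> u = (\<lambda>i. if i < \<nu> then u (\<nu> + i) else 0)"

lemma xpart_in_vecs: "xpart \<nu> u \<in> vecs \<nu>"
  unfolding xpart_def vecs_def by auto

lemma ypart_in_vecs: "ypart \<nu> u \<in> vecs \<nu>"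
  unfolding ypart_def vecs_def by auto

lemma polar_form_parts:
  "\<delta> \<noteq> 2 \<Longrightarrow> polar_form \<nu> \<delta> u v = dotp \<nu> (xpart \<nu> u) (ypart \<nu> v) + dotp \<nu> (ypart \<nu> u) (xpart \<nu> v)"
  unfolding polar_form_def dotp_def xpart_def ypart_def by simp

lemma quad_form_parts: "quad_form \<nu> 0 u = dotp \<nu> (xpart \<nu> u) (ypart \<nu> u)"
  unfolding quad_form_def aniso_part_def dotp_def xpart_def ypart_def by simp

lemma colouring_from_maps:
  fixes M :: "'a \<Rightarrow> (nat \<Rightarrow> gf2) \<Rightarrow> (nat \<Rightarrow> gf2)" and B :: "(nat \<Rightarrow> gf2) \<Rightarrow> (nat \<Rightarrow> gf2) \<Rightarrow> gf2"
  assumes fA: "finite A"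
    and sym: "\<And>a X Y. a \<in> A \<Longrightarrow> X \<in> vecs \<nu> \<Longrightarrow> Y \<in> vecs \<nu> \<Longrightarrow> dotp \<nu> X (M a Y) = dotp \<nu> Y (M a X)"
    and cover: "\<And>u. u \<in> S \<Longrightarrow> xpart \<nu> u \<noteq> (\<lambda>i. 0) \<Longrightarrow> \<exists>a\<in>A. M a (xpart \<nu> u) = ypart \<nu> u"
    and B: "\<And>u v. u \<in> S \<Longrightarrow> v \<in> S \<Longrightarrow> B u v = dotp \<nu> (xpart \<nu> u) (ypart \<nu> v) + dotp \<nu> (ypart \<nu> u) (xpart \<nu> v)"
  shows "\<exists>col. proper_colouring S (\<lambda>u v. B u v \<noteq> 0) (card A + 1) col"
proof -
  obtain h where h: "bij_betw h A {0..<card A}" using ex_bij_betw_finite_nat[OF fA] by blast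
  define sel where "sel u = (SOME a. a \<in> A \<and> M a (xpart \<nu> u) = ypart \<nu> u)" for u
  have sel: "sel u \<in> A \<and> M (sel u) (xpart \<nu> u) = ypart \<nu> u" if "u \<in> S" "xpart \<nu> u \<noteq> (\<lambda>i. 0)" for u
    using cover[OF that] unfolding sel_def by (metis (mono_tags, lifting) someI)
  define col where "col u = (if xpart \<nu> u = (\<lambda>i. 0) then 0 else Suc (h (sel u)))" for u
  have "col u < card A + 1" if "u \<in> S" for u
    using sel[OF that] h bij_betwE unfolding col_def by fastforce
  moreover have "B u v = 0" if u: "u \<in> S" and v: "v \<in> S" and e: "col u = col v" for u v
  proof (cases "xpart \<nu> u = (\<lambda>i. 0)")
    case True
    then have "xpart \<nu> v = (\<lambda>i. 0)" using e unfolding col_def by (auto split: if_splits)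
    then show ?thesis using True B[OF u v] by (simp add: dotp_def)
  next
    case False
    then have Fv: "xpart \<nu> v \<noteq> (\<lambda>i. 0)" using e unfolding col_def by (auto split: if_splits)
    then have "h (sel u) = h (sel v)" using e False unfolding col_def by simp
    then have ab: "sel u = sel v"
      using sel[OF u False] sel[OF v Fv] h unfolding bij_betw_def inj_on_def by blast
    define a where "a = sel u"
    have aA: "a \<in> A" using sel[OF u False] unfolding a_def by simp
    have yu: "ypart \<nu> u = M a (xpart \<nu> u)" using sel[OF u False] unfolding a_def by simp
    have yv: "ypart \<nu> v = M a (xpart \<nu> v)" using sel[OF v Fv] ab unfolding a_def by simp
    have "B u v = dotp \<nu> (xpart \<nu> u) (M a (xpart \<nu> v)) + dotp \<nu> (xpart \<nu> v) (M a (xpart \<nu> u))"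
      unfolding B[OF u v] yu yv by (simp add: dotp_comm)
    also have "\<dots> = 0" using sym[OF aA xpart_in_vecs xpart_in_vecs, of u v] by simp
    finally show ?thesis .
  qed
  ultimately show ?thesis unfolding proper_colouring_def by blast
qed

lemma parabolic_colouring:
  assumes "\<nu> \<ge> 1"
  shows "\<exists>col. proper_colouring (singular_vecs \<nu> 1) (polar_adj \<nu> 1) (2^\<nu> + 1) col"
proof -
  obtain f :: "gf2 poly" where f: "irreducible f" "degree f = \<nu>"
    using irreducible_exists[OF assms] by blast
  interpret gf2_ext f \<nu> using f by unfold_locales
  have "\<exists>col. proper_colouring (singular_vecs \<nu> 1) (polar_adj \<nu> 1) (card (vecs \<nu>) + 1) col"
  proof (rule colouring_from_maps[where M = par_map])
    show "\<exists>a\<in>vecs \<nu>. par_map a (xpart \<nu> u) = ypart \<nu> u" if "xpart \<nu> u \<noteq> (\<lambda>i. 0)" for u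
      by (rule par_map_surj[OF xpart_in_vecs that ypart_in_vecs])
  qed (simp_all add: finite_vecs par_map_sym polar_form_parts)
  then show ?thesis using card_vecs by simp
qed

lemma hyperbolic_colouring:
  assumes k: "odd k"
  shows "\<exists>col. proper_colouring (singular_vecs (Suc k) 0) (polar_adj (Suc k) 0) (2^k + 1) col"
proof -
  have "k \<ge> 1" using k by (cases k) auto
  then obtain f :: "gf2 poly" where f: "irreducible f" "degree f = k"
    using irreducible_exists by blast
  interpret gf2_ext f k using f by unfold_locales
  have "\<exists>col. proper_colouring (singular_vecs (Suc k) 0) (polar_adj (Suc k) 0) (card (vecs k) + 1) col"
  proof (rule colouring_from_maps[where M = hyp_map])
    show "\<exists>a\<in>vecs k. hyp_map a (xpart (Suc k) u) = ypart (Suc k) u"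
      if "u \<in> singular_vecs (Suc k) 0" "xpart (Suc k) u \<noteq> (\<lambda>i. 0)" for u
      using that(1) unfolding singular_vecs_def quad_form_parts
      by (intro hyp_map_surj[OF k xpart_in_vecs that(2) ypart_in_vecs]) simp
  qed (simp_all add: finite_vecs hyp_map_sym[OF k] polar_form_parts)
  then show ?thesis using card_vecs by simp
qed

text \<open>The elliptic form embeds isometrically into the parabolic form of one higher rank, since
  z w + (z + w)^2 = z^2 + z w + w^2 in characteristic 2.\<close>

definition ell_embed :: "nat \<Rightarrow> (nat \<Rightarrow> gf2) \<Rightarrow> nat \<Rightarrow> gf2" where
  "ell_embed \<nu> u = (\<lambda>i. if i < \<nu> then u i else if i = \<nu> then u (2*\<nu>) else if i < 2*\<nu>+1 then u (i - 1)
     else if i = 2*\<nu>+1 then u (2*\<nu>+1) else if i = 2*\<nu>+2 then u (2*\<nu>) + u (2*\<nu>+1) else 0)"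

lemma quad_form_ell_embed: "quad_form (Suc \<nu>) 1 (ell_embed \<nu> u) = quad_form \<nu> 2 u"
proof -
  let ?e = "ell_embed \<nu> u"
  have "dotp (Suc \<nu>) ?e (\<lambda>i. ?e (Suc \<nu> + i)) = dotp \<nu> ?e (\<lambda>i. ?e (Suc \<nu> + i)) + u (2*\<nu>) * u (2*\<nu>+1)"
    unfolding dotp_Suc by (simp add: ell_embed_def)
  moreover have "dotp \<nu> ?e (\<lambda>i. ?e (Suc \<nu> + i)) = dotp \<nu> u (\<lambda>i. u (\<nu> + i))"
    unfolding dotp_def by (rule sum.cong) (auto simp: ell_embed_def)
  moreover have "ell_embed \<nu> u (2 * Suc \<nu>) = u (2*\<nu>) + u (2*\<nu>+1)" by (simp add: ell_embed_def)
  ultimately show ?thesis unfolding quad_form_def aniso_part_def by (simp add: algebra_simps gf2_two)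
qed

lemma ell_embed_vadd: "ell_embed \<nu> (vadd u v) = vadd (ell_embed \<nu> u) (ell_embed \<nu> v)"
  unfolding ell_embed_def vadd_def by (auto simp: algebra_simps)

lemma polar_form_ell_embed: "polar_form (Suc \<nu>) 1 (ell_embed \<nu> u) (ell_embed \<nu> v) = polar_form \<nu> 2 u v"
  unfolding polar_form_eq ell_embed_vadd[symmetric] quad_form_ell_embed ..

lemma ell_embed_singular: "u \<in> singular_vecs \<nu> 2 \<Longrightarrow> ell_embed \<nu> u \<in> singular_vecs (Suc \<nu>) 1"
proof -
  assume u: "u \<in> singular_vecs \<nu> 2"
  have F: "ell_embed \<nu> u \<in> vecs (2 * Suc \<nu> + 1)" using u unfolding singular_vecs_def vecs_def ell_embed_def by auto
  obtain i where i: "u i \<noteq> 0" using u unfolding singular_vecs_def by auto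
  have il: "i < 2*\<nu>+2"
  proof (rule ccontr)
    assume "\<not> i < 2*\<nu>+2" then have "u i = 0" using u unfolding singular_vecs_def vecs_def by auto
    then show False using i by simp
  qed
  have "ell_embed \<nu> u \<noteq> (\<lambda>i. 0)"
  proof
    assume z: "ell_embed \<nu> u = (\<lambda>i. 0)"
    consider "i < \<nu>" | "\<nu> \<le> i \<and> i < 2*\<nu>" | "i = 2*\<nu>" | "i = 2*\<nu>+1" using il by linarith
    then show False
    proof cases
      case 1 then show False using fun_cong[OF z, of i] i by (simp add: ell_embed_def)
    next
      case 2 then show False using fun_cong[OF z, of "i+1"] i by (simp add: ell_embed_def)
    next
      case 3 then show False using fun_cong[OF z, of \<nu>] i by (simp add: ell_embed_def)
    next
      case 4 then show False using fun_cong[OF z, of "2*\<nu>+1"] i by (simp add: ell_embed_def)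
    qed
  qed
  moreover have "quad_form (Suc \<nu>) 1 (ell_embed \<nu> u) = 0" using u unfolding quad_form_ell_embed singular_vecs_def by simp
  ultimately show ?thesis using F unfolding singular_vecs_def by simp
qed

lemma elliptic_colouring:
  assumes "\<nu> \<ge> 1"
  shows "\<exists>col. proper_colouring (singular_vecs \<nu> 2) (polar_adj \<nu> 2) (2^Suc \<nu> + 1) col"
proof -
  obtain col where col: "proper_colouring (singular_vecs (Suc \<nu>) 1) (polar_adj (Suc \<nu>) 1) (2^Suc \<nu> + 1) col"
    using parabolic_colouring[of "Suc \<nu>"] by auto
  have "proper_colouring (singular_vecs \<nu> 2) (polar_adj \<nu> 2) (2^Suc \<nu> + 1) (col \<circ> ell_embed \<nu>)"
    unfolding proper_colouring_def
  proof (intro conjI ballI impI)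
    fix u assume "u \<in> singular_vecs \<nu> 2"
    then show "(col \<circ> ell_embed \<nu>) u < 2^Suc \<nu> + 1"
      using col ell_embed_singular unfolding proper_colouring_def by auto
  next
    fix u v assume uv: "u \<in> singular_vecs \<nu> 2" "v \<in> singular_vecs \<nu> 2" "u \<noteq> v \<and> polar_adj \<nu> 2 u v"
    then have "ell_embed \<nu> u \<noteq> ell_embed \<nu> v"
      by (metis polar_form_ell_embed polar_form_self)
    then show "(col \<circ> ell_embed \<nu>) u \<noteq> (col \<circ> ell_embed \<nu>) v"
      using col uv ell_embed_singular polar_form_ell_embed unfolding proper_colouring_def by auto
  qed
  then show ?thesis by blast
qed

section \<open>Reduction from Z/2^n to GF(2)\<close>

lemma unit_mod_iff_odd: "n \<ge> 1 \<Longrightarrow> unit_mod n x \<longleftrightarrow> odd x"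
  unfolding unit_mod_def by (simp add: coprime_power_right_iff coprime_right_2_iff_odd)

definition Gmat_form :: "nat \<Rightarrow> nat \<Rightarrow> 'r::comm_ring_1 \<Rightarrow> (nat \<Rightarrow> 'r) \<Rightarrow> (nat \<Rightarrow> 'r) \<Rightarrow> 'r" where
  "Gmat_form \<nu> \<delta> \<zeta> a b = (\<Sum>i<\<nu>. a i * b (\<nu> + i)) + (if \<delta> = 1 then a (2*\<nu>) * b (2*\<nu>)
     else if \<delta> = 2 then \<zeta> * a (2*\<nu>) * b (2*\<nu>) + a (2*\<nu>) * b (2*\<nu>+1) + \<zeta> * a (2*\<nu>+1) * b (2*\<nu>+1) else 0)"

definition Gmat_row :: "nat \<Rightarrow> nat \<Rightarrow> 'r::comm_ring_1 \<Rightarrow> (nat \<Rightarrow> 'r) \<Rightarrow> nat \<Rightarrow> 'r" where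
  "Gmat_row \<nu> \<delta> \<zeta> b i = (if i < \<nu> then b (\<nu>+i) else if i < 2*\<nu> then 0 else if \<delta> = 1 then b (2*\<nu>)
     else if i = 2*\<nu> then \<zeta> * b (2*\<nu>) + b (2*\<nu>+1) else \<zeta> * b (2*\<nu>+1))"

lemma sum_Gmat_row:
  fixes b :: "nat \<Rightarrow> 'r::comm_ring_1"
  assumes d: "\<delta> \<le> 2" and i: "i < 2*\<nu>+\<delta>"
  shows "(\<Sum>j<2*\<nu>+\<delta>. of_int (Gmat \<nu> \<delta> z i j) * b j) = Gmat_row \<nu> \<delta> (of_int z) b i"
proof -
  consider "i < \<nu>" | "\<nu> \<le> i \<and> i < 2*\<nu>" | "i = 2*\<nu> \<and> \<delta> = 1" | "i = 2*\<nu> \<and> \<delta> = 2" | "i = 2*\<nu>+1 \<and> \<delta> = 2"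
    using d i by linarith
  then show ?thesis
  proof cases
    case 1
    have "(\<Sum>j<2*\<nu>+\<delta>. of_int (Gmat \<nu> \<delta> z i j) * b j) = (\<Sum>j<2*\<nu>+\<delta>. if j = \<nu>+i then b j else 0)"
      by (rule sum.cong) (use 1 in \<open>auto simp: Gmat_def\<close>)
    also have "\<dots> = b (\<nu>+i)" using 1 by (simp add: sum.delta')
    finally show ?thesis using 1 by (simp add: Gmat_row_def)
  next
    case 2
    have "(\<Sum>j<2*\<nu>+\<delta>. of_int (Gmat \<nu> \<delta> z i j) * b j) = (\<Sum>j<2*\<nu>+\<delta>. 0)"
      by (rule sum.cong) (use 2 in \<open>auto simp: Gmat_def\<close>)
    then show ?thesis using 2 by (simp add: Gmat_row_def)
  next
    case 3
    have "(\<Sum>j<2*\<nu>+\<delta>. of_int (Gmat \<nu> \<delta> z i j) * b j) = (\<Sum>j<2*\<nu>+\<delta>. if j = 2*\<nu> then b j else 0)"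
      by (rule sum.cong) (use 3 in \<open>auto simp: Gmat_def\<close>)
    also have "\<dots> = b (2*\<nu>)" using 3 by (simp add: sum.delta')
    finally show ?thesis using 3 by (simp add: Gmat_row_def)
  next
    case 4
    have "(\<Sum>j<2*\<nu>+\<delta>. of_int (Gmat \<nu> \<delta> z i j) * b j)
        = (\<Sum>j<2*\<nu>+\<delta>. (if j = 2*\<nu> then of_int z * b j else 0) + (if j = 2*\<nu>+1 then b j else 0))"
      by (rule sum.cong) (use 4 in \<open>auto simp: Gmat_def\<close>)
    also have "\<dots> = of_int z * b (2*\<nu>) + b (2*\<nu>+1)" using 4 by (simp add: sum.distrib sum.delta')
    finally show ?thesis using 4 by (simp add: Gmat_row_def)
  next
    case 5
    have "(\<Sum>j<2*\<nu>+\<delta>. of_int (Gmat \<nu> \<delta> z i j) * b j) = (\<Sum>j<2*\<nu>+\<delta>. if j = 2*\<nu>+1 then of_int z * b j else 0)"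
      by (rule sum.cong) (use 5 in \<open>auto simp: Gmat_def\<close>)
    also have "\<dots> = of_int z * b (2*\<nu>+1)" using 5 by (simp add: sum.delta')
    finally show ?thesis using 5 by (simp add: Gmat_row_def)
  qed
qed

lemma sum_Gmat_row_hyperbolic: "(\<Sum>i<2*\<nu>. a i * Gmat_row \<nu> \<delta> \<zeta> b i) = (\<Sum>i<\<nu>. a i * b (\<nu> + i))"
proof -
  have "(\<Sum>i<2*\<nu>. a i * Gmat_row \<nu> \<delta> \<zeta> b i) = (\<Sum>i\<in>{0..<\<nu>}. a i * Gmat_row \<nu> \<delta> \<zeta> b i) + (\<Sum>i\<in>{\<nu>..<2*\<nu>}. a i * Gmat_row \<nu> \<delta> \<zeta> b i)"
    by (simp add: sum.atLeastLessThan_concat lessThan_atLeast0)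
  also have "(\<Sum>i\<in>{\<nu>..<2*\<nu>}. a i * Gmat_row \<nu> \<delta> \<zeta> b i) = 0"
    by (rule sum.neutral) (auto simp: Gmat_row_def)
  also have "(\<Sum>i\<in>{0..<\<nu>}. a i * Gmat_row \<nu> \<delta> \<zeta> b i) = (\<Sum>i<\<nu>. a i * b (\<nu> + i))"
    by (simp add: lessThan_atLeast0 Gmat_row_def)
  finally show ?thesis by simp
qed

lemma sum_Gmat_eq_gram_form:
  fixes a b :: "nat \<Rightarrow> 'r::comm_ring_1"
  assumes d: "\<delta> \<le> 2"
  shows "(\<Sum>i<2*\<nu>+\<delta>. \<Sum>j<2*\<nu>+\<delta>. a i * of_int (Gmat \<nu> \<delta> z i j) * b j) = Gmat_form \<nu> \<delta> (of_int z) a b"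
proof -
  have "(\<Sum>i<2*\<nu>+\<delta>. \<Sum>j<2*\<nu>+\<delta>. a i * of_int (Gmat \<nu> \<delta> z i j) * b j)
      = (\<Sum>i<2*\<nu>+\<delta>. a i * Gmat_row \<nu> \<delta> (of_int z) b i)"
  proof (rule sum.cong[OF refl])
    fix i assume "i \<in> {..<2*\<nu>+\<delta>}"
    then have i: "i < 2*\<nu>+\<delta>" by simp
    have "(\<Sum>j<2*\<nu>+\<delta>. a i * of_int (Gmat \<nu> \<delta> z i j) * b j) = a i * (\<Sum>j<2*\<nu>+\<delta>. of_int (Gmat \<nu> \<delta> z i j) * b j)"
      by (simp add: sum_distrib_left mult.assoc)
    also have "(\<Sum>j<2*\<nu>+\<delta>. of_int (Gmat \<nu> \<delta> z i j) * b j) = Gmat_row \<nu> \<delta> (of_int z) b i"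
      by (rule sum_Gmat_row[OF d i])
    finally show "(\<Sum>j<2*\<nu>+\<delta>. a i * of_int (Gmat \<nu> \<delta> z i j) * b j) = a i * Gmat_row \<nu> \<delta> (of_int z) b i" .
  qed
  also have "\<dots> = Gmat_form \<nu> \<delta> (of_int z) a b"
  proof -
    consider "\<delta> = 0" | "\<delta> = 1" | "\<delta> = 2" using d by linarith
    then show ?thesis
    proof cases
      case 1 then show ?thesis using sum_Gmat_row_hyperbolic by (simp add: Gmat_form_def)
    next
      case 2 then show ?thesis using sum_Gmat_row_hyperbolic[of a \<nu> \<delta> "of_int z" b] by (simp add: Gmat_form_def Gmat_row_def)
    next
      case 3 then show ?thesis using sum_Gmat_row_hyperbolic[of a \<nu> \<delta> "of_int z" b]
        by (simp add: Gmat_form_def Gmat_row_def algebra_simps)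
    qed
  qed
  finally show ?thesis .
qed

lemma bform_Gmat: "\<delta> \<le> 2 \<Longrightarrow> bform (2*\<nu>+\<delta>) (Gmat \<nu> \<delta> z) a b = Gmat_form \<nu> \<delta> z a b"
  using sum_Gmat_eq_gram_form[of \<delta> a \<nu> z b] unfolding bform_def by simp

lemma bform_symmetrize: "bform m (\<lambda>i j. M i j + M j i) a b = bform m M a b + bform m M b a"
proof -
  have "bform m (\<lambda>i j. M i j + M j i) a b = bform m M a b + (\<Sum>i<m. \<Sum>j<m. a i * M j i * b j)"
    unfolding bform_def by (simp add: algebra_simps sum.distrib)
  also have "(\<Sum>i<m. \<Sum>j<m. a i * M j i * b j) = bform m M b a"
    unfolding bform_def by (subst sum.swap) (simp add: ac_simps)
  finally show ?thesis .
qed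

definition red2 :: "(nat \<Rightarrow> int) \<Rightarrow> nat \<Rightarrow> gf2" where
  "red2 a = (\<lambda>i. of_int (a i))"

lemma of_int_bform: "(of_int (bform m M a b) :: gf2) = (\<Sum>i<m. \<Sum>j<m. red2 a i * of_int (M i j) * red2 b j)"
  unfolding bform_def red2_def by simp

lemma red2_quad_form:
  assumes "\<delta> \<le> 2" "odd z"
  shows "(of_int (bform (2*\<nu>+\<delta>) (Gmat \<nu> \<delta> z) a a) :: gf2) = quad_form \<nu> \<delta> (red2 a)"
proof -
  have "(of_int (bform (2*\<nu>+\<delta>) (Gmat \<nu> \<delta> z) a a) :: gf2) = Gmat_form \<nu> \<delta> (of_int z) (red2 a) (red2 a)"
    unfolding of_int_bform by (rule sum_Gmat_eq_gram_form[OF assms(1)])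
  then show ?thesis using of_int_gf2_eq_1_iff[THEN iffD2, OF assms(2)] unfolding Gmat_form_def quad_form_def aniso_part_def dotp_def by simp
qed

lemma red2_polar_form:
  assumes "\<delta> \<le> 2" "odd z"
  shows "(of_int (bform (2*\<nu>+\<delta>) (\<lambda>i j. Gmat \<nu> \<delta> z i j + Gmat \<nu> \<delta> z j i) a b) :: gf2) = polar_form \<nu> \<delta> (red2 a) (red2 b)"
proof -
  have "(of_int (bform (2*\<nu>+\<delta>) (\<lambda>i j. Gmat \<nu> \<delta> z i j + Gmat \<nu> \<delta> z j i) a b) :: gf2)
      = Gmat_form \<nu> \<delta> (of_int z) (red2 a) (red2 b) + Gmat_form \<nu> \<delta> (of_int z) (red2 b) (red2 a)"
    unfolding bform_symmetrize of_int_add of_int_bform sum_Gmat_eq_gram_form[OF assms(1)] ..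
  then show ?thesis using of_int_gf2_eq_1_iff[THEN iffD2, OF assms(2)] unfolding Gmat_form_def polar_form_def dotp_def
    by (simp add: algebra_simps gf2_two)
qed

lemma of_int_gf2_mod_power_two: "n \<ge> 1 \<Longrightarrow> (of_int (x mod 2^n) :: gf2) = of_int x"
proof -
  assume n: "n \<ge> 1"
  have "(2::int) dvd 2^n" using n by (simp add: dvd_power)
  moreover have "x - x mod 2^n = 2^n * (x div 2^n)" by (simp add: minus_mod_eq_mult_div)
  ultimately have "even (x - x mod 2^n)" by simp
  then have "(of_int (x - x mod 2^n) :: gf2) = 0" by (simp only: of_int_gf2_eq_0_iff)
  then have "(of_int x :: gf2) - of_int (x mod 2^n) = 0" by (simp only: of_int_diff)
  then show ?thesis by (simp only: right_minus_eq)
qed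

lemma vclass_self: "a \<in> Vset n m \<Longrightarrow> a \<in> vclass n m a"
  unfolding vclass_def vsim_def unit_mod_def by (auto intro!: exI[of _ 1])

lemma red2_vclass:
  assumes n: "n \<ge> 1" and a: "a \<in> Vset n m" and b: "b \<in> vclass n m a"
  shows "red2 b = red2 a"
proof
  fix i
  have bV: "b \<in> Vset n m" and s: "vsim n m b a" using b unfolding vclass_def by auto
  obtain c where c: "unit_mod n c" "\<forall>i<m. b i mod 2 ^ n = (c * a i) mod 2 ^ n"
    using s unfolding vsim_def by auto
  have c1: "(of_int c :: gf2) = 1" using c(1) unit_mod_iff_odd[OF n] of_int_gf2_eq_1_iff by simp
  show "red2 b i = red2 a i"
  proof (cases "i < m")
    case True
    have "(of_int (b i) :: gf2) = of_int (b i mod 2^n)" using of_int_gf2_mod_power_two[OF n] by simp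
    also have "\<dots> = of_int ((c * a i) mod 2^n)" using c(2) True by simp
    also have "\<dots> = of_int (a i)" using of_int_gf2_mod_power_two[OF n] c1 by simp
    finally show ?thesis unfolding red2_def .
  next
    case False
    then show ?thesis using a bV unfolding red2_def Vset_def by auto
  qed
qed

definition class_red2 :: "(nat \<Rightarrow> int) set \<Rightarrow> nat \<Rightarrow> gf2" where
  "class_red2 X = red2 (SOME a. a \<in> X)"

lemma class_red2_eq:
  assumes n: "n \<ge> 1" and a: "a \<in> Vset n m" and b: "b \<in> vclass n m a"
  shows "class_red2 (vclass n m a) = red2 b"
proof -
  have "(SOME a'. a' \<in> vclass n m a) \<in> vclass n m a"
    by (rule someI[where P="\<lambda>a'. a' \<in> vclass n m a", OF vclass_self[OF a]])
  then have "class_red2 (vclass n m a) = red2 a" unfolding class_red2_def using red2_vclass[OF n a] by blast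
  then show ?thesis using red2_vclass[OF n a b] by simp
qed

lemma Gmat_form_update_y:
  fixes a :: "nat \<Rightarrow> 'r::comm_ring_1"
  assumes "i0 < \<nu>"
  shows "Gmat_form \<nu> \<delta> \<zeta> (a(\<nu>+i0 := a (\<nu>+i0) + t)) (a(\<nu>+i0 := a (\<nu>+i0) + t)) = Gmat_form \<nu> \<delta> \<zeta> a a + a i0 * t"
proof -
  let ?a = "a(\<nu>+i0 := a (\<nu>+i0) + t)"
  have "(\<Sum>i<\<nu>. ?a i * ?a (\<nu> + i)) = (\<Sum>i<\<nu>. a i * a (\<nu> + i) + (if i = i0 then a i0 * t else 0))"
    by (rule sum.cong) (use assms in \<open>auto simp: algebra_simps\<close>)
  also have "\<dots> = (\<Sum>i<\<nu>. a i * a (\<nu> + i)) + a i0 * t" using assms by (simp add: sum.distrib)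
  finally show ?thesis using assms unfolding Gmat_form_def by simp
qed

lemma Gmat_form_update_x:
  fixes a :: "nat \<Rightarrow> 'r::comm_ring_1"
  assumes "i0 < \<nu>"
  shows "Gmat_form \<nu> \<delta> \<zeta> (a(i0 := a i0 + t)) (a(i0 := a i0 + t)) = Gmat_form \<nu> \<delta> \<zeta> a a + t * a (\<nu>+i0)"
proof -
  let ?a = "a(i0 := a i0 + t)"
  have "(\<Sum>i<\<nu>. ?a i * ?a (\<nu> + i)) = (\<Sum>i<\<nu>. a i * a (\<nu> + i) + (if i = i0 then t * a (\<nu>+i0) else 0))"
    by (rule sum.cong) (use assms in \<open>auto simp: algebra_simps\<close>)
  also have "\<dots> = (\<Sum>i<\<nu>. a i * a (\<nu> + i)) + t * a (\<nu>+i0)" using assms by (simp add: sum.distrib)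
  finally show ?thesis using assms unfolding Gmat_form_def by simp
qed

lemma sum_mod_cong:
  fixes f g :: "'b \<Rightarrow> int"
  assumes "\<And>i. i \<in> A \<Longrightarrow> f i mod K = g i mod K"
  shows "sum f A mod K = sum g A mod K"
proof -
  have "sum f A mod K = (\<Sum>i\<in>A. f i mod K) mod K" by (simp add: mod_sum_eq)
  also have "\<dots> = (\<Sum>i\<in>A. g i mod K) mod K" using assms by simp
  also have "\<dots> = sum g A mod K" by (simp add: mod_sum_eq)
  finally show ?thesis .
qed

lemma bform_mod_cong:
  assumes "\<And>i. a i mod K = b i mod K"
  shows "bform m M a a mod K = bform m M b b mod K"
  unfolding bform_def
  by (intro sum_mod_cong) (intro mod_mult_cong assms refl)

context
  fixes n \<nu> \<delta> :: nat and z :: int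
  assumes n: "n \<ge> 1" and d: "\<delta> \<le> 2" and z: "odd z"
begin

lemma orth_verticesE:
  assumes "X \<in> orth_vertices n \<nu> \<delta> z"
  obtains a where "X = vclass n (2*\<nu>+\<delta>) a" "a \<in> Vset n (2*\<nu>+\<delta>)"
    "bform (2*\<nu>+\<delta>) (Gmat \<nu> \<delta> z) a a mod 2 ^ n = 0"
  using assms unfolding orth_vertices_def by auto

lemma class_red2_singular:
  assumes "X \<in> orth_vertices n \<nu> \<delta> z"
  shows "class_red2 X \<in> singular_vecs \<nu> \<delta>"
proof -
  obtain a where a: "X = vclass n (2*\<nu>+\<delta>) a" "a \<in> Vset n (2*\<nu>+\<delta>)"
    "bform (2*\<nu>+\<delta>) (Gmat \<nu> \<delta> z) a a mod 2 ^ n = 0" using assms by (rule orth_verticesE)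
  have rX: "class_red2 X = red2 a" using class_red2_eq[OF n a(2) vclass_self[OF a(2)]] a(1) by simp
  have F: "red2 a \<in> vecs (2*\<nu>+\<delta>)" using a(2) unfolding Vset_def vecs_def red2_def by auto
  obtain i where "unit_mod n (a i)" using a(2) unfolding Vset_def by auto
  then have "red2 a i = 1" using unit_mod_iff_odd[OF n] of_int_gf2_eq_1_iff unfolding red2_def by simp
  then have nz: "red2 a \<noteq> (\<lambda>i. 0)" by (metis one_neq_zero)
  have "(2::int) dvd 2^n" using n by (simp add: dvd_power)
  then have "even (bform (2*\<nu>+\<delta>) (Gmat \<nu> \<delta> z) a a)" using a(3) by (meson dvd_trans mod_0_imp_dvd)
  then have "(of_int (bform (2*\<nu>+\<delta>) (Gmat \<nu> \<delta> z) a a) :: gf2) = 0"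
    by (simp add: of_int_gf2_eq_0_iff)
  then have "quad_form \<nu> \<delta> (red2 a) = 0" using red2_quad_form[OF d z, of \<nu> a] by simp
  then show ?thesis unfolding rX singular_vecs_def using F nz by simp
qed

lemma orth_adj_iff_polar_form:
  assumes X: "X \<in> orth_vertices n \<nu> \<delta> z" and Y: "Y \<in> orth_vertices n \<nu> \<delta> z"
  shows "orth_adj n \<nu> \<delta> z X Y \<longleftrightarrow> polar_adj \<nu> \<delta> (class_red2 X) (class_red2 Y)"
proof -
  obtain a where a: "X = vclass n (2*\<nu>+\<delta>) a" "a \<in> Vset n (2*\<nu>+\<delta>)" using X by (rule orth_verticesE)
  obtain b where b: "Y = vclass n (2*\<nu>+\<delta>) b" "b \<in> Vset n (2*\<nu>+\<delta>)" using Y by (rule orth_verticesE)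
  have key: "unit_mod n (bform (2*\<nu>+\<delta>) (\<lambda>i j. Gmat \<nu> \<delta> z i j + Gmat \<nu> \<delta> z j i) a' b')
      \<longleftrightarrow> polar_adj \<nu> \<delta> (class_red2 X) (class_red2 Y)" if "a' \<in> X" "b' \<in> Y" for a' b'
  proof -
    have "class_red2 X = red2 a'" using class_red2_eq[OF n a(2)] that(1) a(1) by simp
    moreover have "class_red2 Y = red2 b'" using class_red2_eq[OF n b(2)] that(2) b(1) by simp
    moreover have "unit_mod n B \<longleftrightarrow> (of_int B :: gf2) \<noteq> 0" for B
      by (simp add: unit_mod_iff_odd[OF n] of_int_gf2_eq_0_iff)
    ultimately show ?thesis using red2_polar_form[OF d z, of \<nu> a' b'] by simp
  qed
  have "a \<in> X" "b \<in> Y" using a b vclass_self by auto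
  then show ?thesis unfolding orth_adj_def using key by blast
qed

text \<open>Changing the partner of a coordinate equal to 1 by -Q changes the form by -Q, and since Q
  is even this does not change the reduction mod 2.\<close>

lemma singular_vec_int_lift:
  assumes u: "u \<in> singular_vecs \<nu> \<delta>"
  obtains a :: "nat \<Rightarrow> int"
  where "Gmat_form \<nu> \<delta> z a a = 0" "red2 a = u" "\<And>i. i \<ge> 2*\<nu>+\<delta> \<Longrightarrow> a i = 0"
proof -
  have uF: "u \<in> vecs (2*\<nu>+\<delta>)" "u \<noteq> (\<lambda>i. 0)" "quad_form \<nu> \<delta> u = 0"
    using u unfolding singular_vecs_def by auto
  define a0 :: "nat \<Rightarrow> int" where "a0 i = (if u i = 1 then 1 else 0)" for i
  have ra0: "red2 a0 = u"
  proof
    fix i show "red2 a0 i = u i" using gf2_cases[of "u i"] unfolding red2_def a0_def by auto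
  qed
  have a0m: "a0 i = 0" if "i \<ge> 2*\<nu>+\<delta>" for i using uF(1) that unfolding a0_def vecs_def by auto
  define Q0 where "Q0 = Gmat_form \<nu> \<delta> z a0 a0"
  have "(of_int Q0 :: gf2) = 0"
    using red2_quad_form[OF d z, of \<nu> a0] uF(3) ra0 bform_Gmat[OF d] unfolding Q0_def by simp
  then have eQ0: "even Q0" by (simp add: of_int_gf2_eq_0_iff)
  have "\<exists>i0<\<nu>. u i0 \<noteq> 0 \<or> u (\<nu>+i0) \<noteq> 0"
    using singular_hyperbolic_part_zero[OF d uF(3)] vecs_index_less[OF uF(1)] uF(2) by blast
  then obtain i0 where i0: "i0 < \<nu>" "u i0 \<noteq> 0 \<or> u (\<nu>+i0) \<noteq> 0" by blast
  have red_upd: "red2 (a0(j := a0 j - Q0)) = u" for j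
    unfolding ra0[symmetric] red2_def using eQ0 by (auto simp: of_int_gf2_eq_0_iff)
  show ?thesis
  proof (cases "u i0 \<noteq> 0")
    case True
    then have "a0 i0 = 1" using gf2_neq_0_iff unfolding a0_def by simp
    then have "Gmat_form \<nu> \<delta> z (a0(\<nu>+i0 := a0 (\<nu>+i0) - Q0)) (a0(\<nu>+i0 := a0 (\<nu>+i0) - Q0)) = 0"
      using Gmat_form_update_y[OF i0(1), of \<delta> z a0 "- Q0"] unfolding Q0_def by simp
    then show ?thesis by (rule that) (use red_upd a0m i0(1) in auto)
  next
    case False
    then have "a0 (\<nu>+i0) = 1" using i0(2) gf2_neq_0_iff unfolding a0_def by simp
    then have "Gmat_form \<nu> \<delta> z (a0(i0 := a0 i0 - Q0)) (a0(i0 := a0 i0 - Q0)) = 0"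
      using Gmat_form_update_x[OF i0(1), of \<delta> z a0 "- Q0"] unfolding Q0_def by simp
    then show ?thesis by (rule that) (use red_upd a0m i0(1) in auto)
  qed
qed

lemma singular_vec_lifts:
  assumes u: "u \<in> singular_vecs \<nu> \<delta>"
  shows "\<exists>X\<in>orth_vertices n \<nu> \<delta> z. class_red2 X = u"
proof -
  define m where "m = 2*\<nu>+\<delta>"
  obtain a1 where a1: "Gmat_form \<nu> \<delta> z a1 a1 = 0" "red2 a1 = u" "\<And>i. i \<ge> m \<Longrightarrow> a1 i = 0"
    using singular_vec_int_lift[OF u] unfolding m_def by blast
  define a2 where "a2 i = a1 i mod 2^n" for i
  have ra2: "red2 a2 = u" unfolding a2_def using a1(2) of_int_gf2_mod_power_two[OF n] unfolding red2_def by auto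
  have a2V: "a2 \<in> Vset n m"
  proof -
    obtain i where ui: "u i \<noteq> 0" using u unfolding singular_vecs_def by auto
    then have "i < m" using u vecs_index_less unfolding singular_vecs_def m_def by blast
    moreover have "(of_int (a2 i) :: gf2) = 1" using ra2 ui gf2_neq_0_iff unfolding red2_def by metis
    then have "odd (a2 i)" by (simp add: of_int_gf2_eq_1_iff)
    ultimately have "\<exists>i<m. unit_mod n (a2 i)" using unit_mod_iff_odd[OF n] by blast
    then show ?thesis unfolding Vset_def a2_def using a1(3) by simp
  qed
  have "bform m (Gmat \<nu> \<delta> z) a2 a2 mod 2^n = bform m (Gmat \<nu> \<delta> z) a1 a1 mod 2^n"
    by (rule bform_mod_cong) (simp add: a2_def)
  also have "bform m (Gmat \<nu> \<delta> z) a1 a1 = 0" unfolding m_def bform_Gmat[OF d] by (rule a1(1))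
  finally have "vclass n m a2 \<in> orth_vertices n \<nu> \<delta> z"
    using a2V unfolding orth_vertices_def m_def by auto
  moreover have "class_red2 (vclass n m a2) = u" using class_red2_eq[OF n a2V vclass_self[OF a2V]] ra2 by simp
  ultimately show ?thesis by blast
qed

lemma class_red2_image: "class_red2 ` orth_vertices n \<nu> \<delta> z = singular_vecs \<nu> \<delta>"
  using class_red2_singular singular_vec_lifts by blast

end

section \<open>The chromatic number\<close>

lemma chromatic_number_eqI:
  assumes "proper_colouring V E K f" and "\<And>k g. proper_colouring V E k g \<Longrightarrow> K \<le> k"
  shows "chromatic_number V E = K"
  unfolding chromatic_number_def by (rule Least_equality) (use assms in blast)+

lemma proper_colouring_surj_iff:
  assumes S: "red ` V = S" and E: "\<And>X Y. X \<in> V \<Longrightarrow> Y \<in> V \<Longrightarrow> E X Y \<longleftrightarrow> E' (red X) (red Y)"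
    and irrefl: "\<And>u. \<not> E' u u"
  shows "(\<exists>f. proper_colouring V E k f) \<longleftrightarrow> (\<exists>g. proper_colouring S E' k g)"
proof
  assume "\<exists>f. proper_colouring V E k f"
  then obtain f where f: "proper_colouring V E k f" ..
  define lift where "lift = inv_into V red"
  have lift: "lift u \<in> V" "red (lift u) = u" if "u \<in> S" for u
    using that S unfolding lift_def by (auto intro: inv_into_into f_inv_into_f)
  have "proper_colouring S E' k (f \<circ> lift)"
    unfolding proper_colouring_def
  proof (intro conjI ballI impI)
    fix u assume "u \<in> S"
    then show "(f \<circ> lift) u < k" using f lift unfolding proper_colouring_def by simp
  next
    fix u v assume u: "u \<in> S" and v: "v \<in> S" and uv: "u \<noteq> v \<and> E' u v"
    then have "lift u \<noteq> lift v" "E (lift u) (lift v)" using lift[OF u] lift[OF v] E by metis+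
    then show "(f \<circ> lift) u \<noteq> (f \<circ> lift) v"
      using f lift[OF u] lift[OF v] unfolding proper_colouring_def by simp
  qed
  then show "\<exists>g. proper_colouring S E' k g" by blast
next
  assume "\<exists>g. proper_colouring S E' k g"
  then obtain g where g: "proper_colouring S E' k g" ..
  have "proper_colouring V E k (g \<circ> red)"
    unfolding proper_colouring_def
  proof (intro conjI ballI impI)
    fix X assume "X \<in> V"
    then show "(g \<circ> red) X < k" using g S unfolding proper_colouring_def by auto
  next
    fix X Y assume X: "X \<in> V" and Y: "Y \<in> V" and XY: "X \<noteq> Y \<and> E X Y"
    then have "E' (red X) (red Y)" using E by blast
    moreover have "red X \<noteq> red Y" using calculation irrefl by metis
    ultimately show "(g \<circ> red) X \<noteq> (g \<circ> red) Y"
      using g X Y S unfolding proper_colouring_def by auto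
  qed
  then show "\<exists>f. proper_colouring V E k f" by blast
qed

lemma chromatic_number_surj_eq:
  assumes "red ` V = S" "\<And>X Y. X \<in> V \<Longrightarrow> Y \<in> V \<Longrightarrow> E X Y \<longleftrightarrow> E' (red X) (red Y)"
    "\<And>u. \<not> E' u u"
  shows "chromatic_number V E = chromatic_number S E'"
proof -
  have "(\<exists>f. proper_colouring V E k f) \<longleftrightarrow> (\<exists>g. proper_colouring S E' k g)" for k
    by (intro proper_colouring_surj_iff) (use assms in auto)
  then show ?thesis unfolding chromatic_number_def by simp
qed

lemma singular_colouring_ge:
  assumes d: "\<delta> \<le> 2" and n: "\<nu> \<ge> 1"
    and col: "proper_colouring (singular_vecs \<nu> \<delta>) (polar_adj \<nu> \<delta>) k g"
  shows "2^(\<nu>+\<delta>-1) + 1 \<le> k"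
proof -
  define C where "C c = {u\<in>singular_vecs \<nu> \<delta>. g u = c}" for c
  have adj: "g u \<noteq> g v"
    if "u \<in> singular_vecs \<nu> \<delta>" "v \<in> singular_vecs \<nu> \<delta>" "u \<noteq> v" "polar_form \<nu> \<delta> u v \<noteq> 0" for u v
    using col that unfolding proper_colouring_def by blast
  have card_C: "card (C c) \<le> 2^\<nu> - 1" for c
  proof (rule orthogonal_singular_card_le[OF d])
    show "C c \<subseteq> singular_vecs \<nu> \<delta>" unfolding C_def by auto
    show "\<forall>u\<in>C c. \<forall>v\<in>C c. polar_form \<nu> \<delta> u v = 0"
    proof (intro ballI)
      fix u v assume "u \<in> C c" "v \<in> C c"
      then show "polar_form \<nu> \<delta> u v = 0"
        using adj[of u v] polar_form_self[of \<nu> \<delta> u] unfolding C_def by (cases "u = v") auto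
    qed
  qed
  have "singular_vecs \<nu> \<delta> \<subseteq> (\<Union>c<k. C c)"
    using col unfolding C_def proper_colouring_def by auto
  then have "card (singular_vecs \<nu> \<delta>) \<le> card (\<Union>c<k. C c)"
    by (intro card_mono) (auto simp: C_def finite_singular_vecs)
  also have "\<dots> \<le> (\<Sum>c<k. card (C c))" by (rule card_UN_le) simp
  also have "\<dots> \<le> k * (2^\<nu> - 1)" using sum_mono[of "{..<k}", OF card_C] by simp
  finally have "(2^(\<nu>+\<delta>-1) + 1) * (2^\<nu> - 1) \<le> k * (2^\<nu> - 1)"
    using card_singular_vecs_ge[OF d n] by (rule le_trans[rotated])
  moreover have "(0::nat) < 2^\<nu> - 1" using one_less_power[of "2::nat" \<nu>] n by simp
  ultimately show ?thesis using mult_le_cancel2[of "2^(\<nu>+\<delta>-1) + 1" "2^\<nu> - 1" k] by blast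
qed

lemma singular_colouring_exists:
  assumes "\<nu> \<ge> 1" "\<delta> \<le> 2" "\<not> (\<delta> = 0 \<and> odd \<nu>)"
  shows "\<exists>col. proper_colouring (singular_vecs \<nu> \<delta>) (polar_adj \<nu> \<delta>) (2^(\<nu>+\<delta>-1) + 1) col"
proof -
  consider "\<delta> = 0" | "\<delta> = 1" | "\<delta> = 2" using assms(2) by linarith
  then show ?thesis
  proof cases
    case 1
    then obtain k where "\<nu> = Suc k" "odd k" using assms(1,3) by (cases \<nu>) auto
    then show ?thesis using hyperbolic_colouring 1 by simp
  next
    case 2 then show ?thesis using parabolic_colouring[OF assms(1)] by simp
  next
    case 3 then show ?thesis using elliptic_colouring[OF assms(1)] by simp
  qed
qed

lemma chromatic_number_singular_vecs:
  assumes "\<nu> \<ge> 1" "\<delta> \<le> 2" "\<not> (\<delta> = 0 \<and> odd \<nu>)"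
  shows "chromatic_number (singular_vecs \<nu> \<delta>) (polar_adj \<nu> \<delta>) = 2^(\<nu>+\<delta>-1) + 1"
proof -
  obtain col where "proper_colouring (singular_vecs \<nu> \<delta>) (polar_adj \<nu> \<delta>) (2^(\<nu>+\<delta>-1) + 1) col"
    using singular_colouring_exists[OF assms] by blast
  then show ?thesis using singular_colouring_ge[OF assms(2,1)] by (rule chromatic_number_eqI)
qed

lemma chromatic_number_orth_graph:
  assumes "n \<ge> 1" "\<delta> \<le> 2" "odd z"
  shows "chromatic_number (orth_vertices n \<nu> \<delta> z) (orth_adj n \<nu> \<delta> z)
    = chromatic_number (singular_vecs \<nu> \<delta>) (polar_adj \<nu> \<delta>)"
  using class_red2_image[OF assms] orth_adj_iff_polar_form[OF assms] polar_form_self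
  by (intro chromatic_number_surj_eq) auto

theorem theorem2p7:
  fixes n \<nu> \<delta> :: nat and z :: int
  assumes "n \<ge> 1" and "\<nu> \<ge> 1" and "\<delta> \<in> {0, 1, 2}"
    and "\<not> (\<delta> = 0 \<and> odd \<nu>)"
    and "unit_mod n z"
  shows "chromatic_number (orth_vertices n \<nu> \<delta> z) (orth_adj n \<nu> \<delta> z)
           = 2 ^ (\<nu> + \<delta> - 1) + 1"
proof -
  have d: "\<delta> \<le> 2" using assms(3) by auto
  have z: "odd z" using assms(5) unit_mod_iff_odd[OF assms(1)] by simp
  show ?thesis
    unfolding chromatic_number_orth_graph[OF assms(1) d z]
    using chromatic_number_singular_vecs[OF assms(2) d assms(4)] by simp
qed

end
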